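(* Let $h$ be a $1$-times weak Lefschetz O-sequence, let $n=h_1$ and $R=K[x_1,\ldots,x_n]$. Then the monomial ideal $\mathcal{W}_{1}(h)\subset R$ is strongly stable.
   Context: $K$ is an infinite field of characteristic $0$. An O-sequence is a sequence of non-negative integers that is the Hilbert function of some standard graded $K$-algebra; a finite O-sequence $h: 1=h_0,h_1,\ldots,h_s$ with $h_s\neq 0$ (and $h_d=0$ for $d>s$) has length $s$. $h$ is unimodal if $h_0<h_1<\cdots<h_k\ge h_{k+1}\ge\cdots\ge h_s$ for some $k$; then $\Delta h$ denotes the sequence $1, h_1-h_0,\ldots,h_k-h_{k-1}$. $h$ is a ($1$-times) weak Lefschetz O-sequence if it is unimodal and $\Delta h$ is an O-sequence. Monomials are ordered with $x_1>x_2>\cdots>x_n$; "rev-lex" means the degree reverse lexicographic order. For an O-sequence $g$ with $g_1=n-1$, $\mathrm{Lex}(g)\subset R'=K[x_1,\ldots,x_{n-1}]$ is the lex-segment ideal: its degree-$d$ component is spanned by the largest $\dim R'_d-g_d$ monomials of degree $d$ in lexicographic order, so $R'/\mathrm{Lex}(g)$ has Hilbert function $g$. Construction of $\mathcal{W}_1(h)$: start with $I=\mathrm{Lex}(\Delta h)R$ (the extension to $R$). While the Hilbert function of $R/I$ differs from $h$, let $d_0$ be the least degree where they differ, set $r=\dim_K(R/I)_{d_0}-h_{d_0}$ (this is positive), and replace $I$ by $I$ plus the ideal generated by the $r$ largest (in rev-lex order) monomials of degree $d_0$ not in $I$. After finitely many steps $R/I$ has Hilbert function $h$; the resulting ideal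 is $\mathcal{W}_1(h)$. A monomial ideal $I$ is strongly stable if for every monomial $M\in I$ and every variable $x_k$ dividing $M$, $(x_i/x_k)M\in I$ for all $i<k$. *)

theory Defs
  imports Main
begin

text \<open>Monomials in the variables x_1,...,x_n are exponent vectors a :: nat => nat,
  where a i is the exponent of x_(i+1); they vanish at every index i >= n.
  A monomial ideal is represented by the set of monomials it contains.\<close>

definition mons :: "nat \<Rightarrow> (nat \<Rightarrow> nat) set" where
  "mons n = {a. \<forall>i\<ge>n. a i = 0}"

definition mdeg :: "nat \<Rightarrow> (nat \<Rightarrow> nat) \<Rightarrow> nat" where
  "mdeg n a = (\<Sum>i<n. a i)"

definition mons_deg :: "nat \<Rightarrow> nat \<Rightarrow> (nat \<Rightarrow> nat) set" where
  "mons_deg n d = {a \<in> mons n. mdeg n a = d}"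

definition mdvd :: "(nat \<Rightarrow> nat) \<Rightarrow> (nat \<Rightarrow> nat) \<Rightarrow> bool" where
  "mdvd a b \<longleftrightarrow> (\<forall>i. a i \<le> b i)"

definition monomial_ideal :: "nat \<Rightarrow> (nat \<Rightarrow> nat) set \<Rightarrow> bool" where
  "monomial_ideal n I \<longleftrightarrow> I \<subseteq> mons n \<and>
     (\<forall>a\<in>I. \<forall>b\<in>mons n. mdvd a b \<longrightarrow> b \<in> I)"

definition gen_ideal :: "nat \<Rightarrow> (nat \<Rightarrow> nat) set \<Rightarrow> (nat \<Rightarrow> nat) set" where
  "gen_ideal n G = {b \<in> mons n. \<exists>a\<in>G. mdvd a b}"

definition hilb :: "nat \<Rightarrow> (nat \<Rightarrow> nat) set \<Rightarrow> nat \<Rightarrow> nat" where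
  "hilb n I d = card {a \<in> mons_deg n d. a \<notin> I}"

text \<open>O-sequence: Hilbert function of a standard graded K-algebra R/I; by passing to an
  initial ideal, I may be taken to be a monomial ideal.\<close>
definition O_sequence :: "(nat \<Rightarrow> nat) \<Rightarrow> bool" where
  "O_sequence h \<longleftrightarrow> (\<exists>n I. monomial_ideal n I \<and> (\<forall>d. h d = hilb n I d))"

definition finite_O_sequence :: "(nat \<Rightarrow> nat) \<Rightarrow> bool" where
  "finite_O_sequence h \<longleftrightarrow> O_sequence h \<and> h 0 = 1 \<and>
     (\<exists>s. h s \<noteq> 0 \<and> (\<forall>d>s. h d = 0))"

definition unimodal :: "(nat \<Rightarrow> nat) \<Rightarrow> bool" where
  "unimodal h \<longleftrightarrow> (\<exists>k. (\<forall>i<k. h i < h (Suc i)) \<and> (\<forall>i\<ge>k. h (Suc i) \<le> h i))"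

definition peak :: "(nat \<Rightarrow> nat) \<Rightarrow> nat" where
  "peak h = (LEAST k. h (Suc k) \<le> h k)"

definition Delta :: "(nat \<Rightarrow> nat) \<Rightarrow> nat \<Rightarrow> nat" where
  "Delta h d = (if d = 0 then 1 else if d \<le> peak h then h d - h (d - 1) else 0)"

definition weak_lefschetz_O_seq :: "(nat \<Rightarrow> nat) \<Rightarrow> bool" where
  "weak_lefschetz_O_seq h \<longleftrightarrow> finite_O_sequence h \<and> unimodal h \<and> O_sequence (Delta h)"

definition lex_gt :: "(nat \<Rightarrow> nat) \<Rightarrow> (nat \<Rightarrow> nat) \<Rightarrow> bool" where
  "lex_gt a b \<longleftrightarrow> (\<exists>i. (\<forall>j<i. a j = b j) \<and> a i > b i)"

definition revlex_gt :: "nat \<Rightarrow> (nat \<Rightarrow> nat) \<Rightarrow> (nat \<Rightarrow> nat) \<Rightarrow> bool" where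
  "revlex_gt n a b \<longleftrightarrow> mdeg n a > mdeg n b \<or>
     (mdeg n a = mdeg n b \<and> (\<exists>i<n. (\<forall>j. i < j \<and> j < n \<longrightarrow> a j = b j) \<and> a i < b i))"

definition lex_seg :: "nat \<Rightarrow> (nat \<Rightarrow> nat) \<Rightarrow> nat \<Rightarrow> (nat \<Rightarrow> nat) set" where
  "lex_seg m g d = {a \<in> mons_deg m d.
      card {b \<in> mons_deg m d. lex_gt b a} < card (mons_deg m d) - g d}"

definition Lex :: "nat \<Rightarrow> (nat \<Rightarrow> nat) \<Rightarrow> (nat \<Rightarrow> nat) set" where
  "Lex m g = gen_ideal m (\<Union>d. lex_seg m g d)"

definition W1_step :: "nat \<Rightarrow> (nat \<Rightarrow> nat) \<Rightarrow> (nat \<Rightarrow> nat) set \<Rightarrow> (nat \<Rightarrow> nat) set" where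
  "W1_step n h I =
    (if (\<forall>d. hilb n I d = h d) then I
     else (let d0 = (LEAST d. hilb n I d \<noteq> h d);
               r = hilb n I d0 - h d0;
               C = {a \<in> mons_deg n d0. a \<notin> I};
               new = {a \<in> C. card {b \<in> C. revlex_gt n b a} < r}
           in gen_ideal n (I \<union> new)))"

definition W1_start :: "nat \<Rightarrow> (nat \<Rightarrow> nat) \<Rightarrow> (nat \<Rightarrow> nat) set" where
  "W1_start n h = gen_ideal n (Lex (n - 1) (Delta h))"

definition W1 :: "(nat \<Rightarrow> nat) \<Rightarrow> (nat \<Rightarrow> nat) set" where
  "W1 h = (let n = h 1;
               N = (LEAST N. \<forall>d. hilb n ((W1_step n h ^^ N) (W1_start n h)) d = h d)
           in (W1_step n h ^^ N) (W1_start n h))"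

definition strongly_stable :: "nat \<Rightarrow> (nat \<Rightarrow> nat) set \<Rightarrow> bool" where
  "strongly_stable n I \<longleftrightarrow>
     (\<forall>a\<in>I. \<forall>k<n. a k > 0 \<longrightarrow> (\<forall>i<k. (a(k := a k - 1))(i := a i + 1) \<in> I))"

end

theory Submission
  imports Defs
begin

text \<open>
  Variables are indexed from \<open>0\<close>, as in the exponent vectors: \<open>R = K[x\<^sub>0,\<dots>,x\<^sub>m]\<close> with
  \<open>h\<^sub>1 = m + 1\<close>, and \<open>x\<^sub>m\<close> is the last variable. Let \<open>g = \<Delta>h\<close> and let \<open>k\<close> be the peak of \<open>h\<close>.

  By Macaulay's theorem on lex segments, \<open>K[x\<^sub>0,\<dots>,x\<^sub>m\<^sub>-\<^sub>1]/Lex(g)\<close> has Hilbert function \<open>g\<close>;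
  since \<open>x\<^sub>m\<close> does not occur in \<open>Lex(g)\<close>, the Hilbert function of \<open>R/Lex(g)R\<close> is the partial
  sum of \<open>g\<close>, which agrees with \<open>h\<close> up to degree \<open>k\<close>. Lex ideals are strongly stable, and so
  is their extension to \<open>R\<close>.

  Above degree \<open>k\<close> a monomial is standard iff it is \<open>x\<^sub>m\<close> times a standard monomial. Hence
  the Hilbert function is constant after the last degree \<open>D\<close> where it matches \<open>h\<close>, the first
  mismatch \<open>d\<^sub>0 = D + 1\<close> has \<open>h(d\<^sub>0) \<le> h(d\<^sub>0 - 1) = dim (R/I)\<^sub>d\<^sub>0\<close>, and a construction step
  adds a revlex-initial segment of the standard monomials of degree \<open>d\<^sub>0\<close>. Replacing \<open>x\<^sub>j\<close> by
  \<open>x\<^sub>i\<close> (\<open>i < j\<close>) increases the revlex order, so strong stability survives the step, and so does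
  the description of standard monomials, now above \<open>d\<^sub>0\<close>. Once \<open>D\<close> exceeds the length of \<open>h\<close>,
  the Hilbert function is \<open>h\<close>.

  Macaulay's theorem is proved by compression: compressing a set of monomials in two
  variables \<open>x\<^sub>i, x\<^sub>p\<close> keeps its size, does not enlarge its shadow, and strictly decreases the
  total \<open>x\<^sub>p\<close>-degree unless the set is already stable; for stable sets the shadow splits along
  the last variable, which allows induction on the number of variables and the degree.
\<close>

section \<open>Rank in a finite strict linear order\<close>

definition finite_linear_order_on :: "('a \<Rightarrow> 'a \<Rightarrow> bool) \<Rightarrow> 'a set \<Rightarrow> bool" where
  "finite_linear_order_on R C \<longleftrightarrow> finite C \<and> (\<forall>a\<in>C. \<not> R a a) \<and>
     (\<forall>a\<in>C. \<forall>b\<in>C. \<forall>c\<in>C. R a b \<longrightarrow> R b c \<longrightarrow> R a c) \<and>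
     (\<forall>a\<in>C. \<forall>b\<in>C. a \<noteq> b \<longrightarrow> R a b \<or> R b a)"

text \<open>\<open>R b a\<close> means that \<open>b\<close> is larger than \<open>a\<close>, so rank 0 is the largest element.\<close>

definition order_rank :: "('a \<Rightarrow> 'a \<Rightarrow> bool) \<Rightarrow> 'a set \<Rightarrow> 'a \<Rightarrow> nat" where
  "order_rank R C a = card {b \<in> C. R b a}"

context
  fixes R :: "'a \<Rightarrow> 'a \<Rightarrow> bool" and C :: "'a set"
  assumes lin: "finite_linear_order_on R C"
begin

lemma finite_order_carrier: "finite C"
  using lin unfolding finite_linear_order_on_def by blast

lemma order_irrefl: "a \<in> C \<Longrightarrow> \<not> R a a"
  using lin unfolding finite_linear_order_on_def by blast

lemma order_trans: "a \<in> C \<Longrightarrow> b \<in> C \<Longrightarrow> c \<in> C \<Longrightarrow> R a b \<Longrightarrow> R b c \<Longrightarrow> R a c"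
  using lin unfolding finite_linear_order_on_def by blast

lemma order_total: "a \<in> C \<Longrightarrow> b \<in> C \<Longrightarrow> a \<noteq> b \<Longrightarrow> R a b \<or> R b a"
  using lin unfolding finite_linear_order_on_def by blast

lemma order_rank_less_card:
  assumes "a \<in> C" shows "order_rank R C a < card C"
proof -
  have "{b \<in> C. R b a} \<subset> C" using assms order_irrefl[OF assms] by blast
  then show ?thesis unfolding order_rank_def using finite_order_carrier by (simp add: psubset_card_mono)
qed

lemma order_rank_strict_mono:
  assumes "a \<in> C" "b \<in> C" "R b a" shows "order_rank R C b < order_rank R C a"
proof -
  have "{c \<in> C. R c b} \<subseteq> {c \<in> C. R c a}" using order_trans[OF _ assms(2,1) _ assms(3)] by blast
  moreover have "b \<in> {c \<in> C. R c a} - {c \<in> C. R c b}" using assms order_irrefl[OF assms(2)] by blast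
  ultimately have "{c \<in> C. R c b} \<subset> {c \<in> C. R c a}" by blast
  then show ?thesis unfolding order_rank_def using finite_order_carrier by (simp add: psubset_card_mono)
qed

lemma inj_on_order_rank: "inj_on (order_rank R C) C"
proof (rule inj_onI)
  fix a b assume ab: "a \<in> C" "b \<in> C" "order_rank R C a = order_rank R C b"
  show "a = b"
  proof (rule ccontr)
    assume "a \<noteq> b"
    then have "R a b \<or> R b a" using order_total ab by blast
    then show False using order_rank_strict_mono ab by fastforce
  qed
qed

lemma order_rank_image: "order_rank R C ` C = {..<card C}"
proof -
  have "card (order_rank R C ` C) = card C" using card_image[OF inj_on_order_rank] .
  then show ?thesis using order_rank_less_card by (intro card_subset_eq) auto
qed

lemma card_order_rank_less: "card {a \<in> C. order_rank R C a < r} = min r (card C)"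
proof -
  have inj: "inj_on (order_rank R C) {a \<in> C. order_rank R C a < r}"
    using inj_on_order_rank by (rule inj_on_subset) auto
  have "order_rank R C ` {a \<in> C. order_rank R C a < r} = {..<card C} \<inter> {..<r}"
    using order_rank_image by auto
  also have "\<dots> = {..<min r (card C)}" by auto
  finally show ?thesis using card_image[OF inj] by simp
qed

lemma order_rank_less_upward:
  assumes "a \<in> C" "order_rank R C a < r" "b \<in> C" "R b a" shows "order_rank R C b < r"
  using order_rank_strict_mono[OF assms(1,3,4)] assms(2) by simp

lemma upward_closed_eq_order_rank_less:
  assumes "X \<subseteq> C" "\<forall>a\<in>X. \<forall>b\<in>C. R b a \<longrightarrow> b \<in> X"
  shows "X = {a \<in> C. order_rank R C a < card X}"
proof -
  have fX: "finite X" using assms(1) finite_order_carrier finite_subset by auto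
  { fix a assume a: "a \<in> X"
    have "{b \<in> C. R b a} \<subseteq> X - {a}" using assms a order_irrefl by blast
    then have "card {b \<in> C. R b a} \<le> card (X - {a})" using fX by (intro card_mono) auto
    also have "\<dots> < card X" by (rule card_Diff1_less[OF fX a])
    finally have "order_rank R C a < card X" unfolding order_rank_def . }
  moreover
  { fix a assume a: "a \<in> C" "a \<notin> X"
    have "X \<subseteq> {b \<in> C. R b a}"
    proof
      fix x assume x: "x \<in> X"
      then have "R x a \<or> R a x" using order_total assms(1) a by (metis subsetD)
      then show "x \<in> {b \<in> C. R b a}" using assms a x by blast
    qed
    then have "card X \<le> order_rank R C a" unfolding order_rank_def
      using finite_order_carrier by (intro card_mono) auto }
  ultimately show ?thesis using assms(1) by force
qed

end

section \<open>Monomials\<close>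

lemma mdeg_fun_upd:
  assumes "i < n" shows "mdeg n (a(i := v)) + a i = mdeg n a + v"
proof -
  have i: "i \<in> {..<n}" using assms by simp
  have "mdeg n (a(i := v)) = (a(i:=v)) i + (\<Sum>j\<in>{..<n} - {i}. (a(i:=v)) j)"
    unfolding mdeg_def by (rule sum.remove[OF _ i]) simp
  moreover have "mdeg n a = a i + (\<Sum>j\<in>{..<n} - {i}. a j)"
    unfolding mdeg_def by (rule sum.remove[OF _ i]) simp
  moreover have "(\<Sum>j\<in>{..<n} - {i}. (a(i:=v)) j) = (\<Sum>j\<in>{..<n} - {i}. a j)"
    by (rule sum.cong) auto
  ultimately show ?thesis by simp
qed

lemma mdeg_incr: "i < n \<Longrightarrow> mdeg n (a(i := Suc (a i))) = Suc (mdeg n a)"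
  using mdeg_fun_upd[of i n a "Suc (a i)"] by linarith

lemma mdeg_decr: "i < n \<Longrightarrow> 0 < a i \<Longrightarrow> Suc (mdeg n (a(i := a i - 1))) = mdeg n a"
  using mdeg_fun_upd[of i n a "a i - 1"] by linarith

lemma mdeg_move:
  "i < n \<Longrightarrow> j < n \<Longrightarrow> i \<noteq> j \<Longrightarrow> 0 < a j \<Longrightarrow> mdeg n ((a(j := a j - 1))(i := a i + 1)) = mdeg n a"
  using mdeg_incr[of i n "a(j := a j - 1)"] mdeg_decr[of j n a] by simp

lemma exponent_le_mdeg: "i < n \<Longrightarrow> a i \<le> mdeg n a"
  unfolding mdeg_def by (rule member_le_sum) auto

lemma mons_fun_upd: "a \<in> mons n \<Longrightarrow> i < n \<Longrightarrow> a(i := v) \<in> mons n"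
  unfolding mons_def by auto

lemma mons_exponent_pos: "a \<in> mons n \<Longrightarrow> a j \<noteq> 0 \<Longrightarrow> j < n"
  unfolding mons_def by (cases "j < n") auto

lemma mons_deg_move:
  assumes "a \<in> mons_deg n d" "i < j" "0 < a j"
  shows "(a(j := a j - 1))(i := a i + 1) \<in> mons_deg n d"
proof -
  have a: "a \<in> mons n" "mdeg n a = d" using assms(1) unfolding mons_deg_def by auto
  have "j < n" using mons_exponent_pos[OF a(1)] assms(3) by simp
  then show ?thesis using assms a mons_fun_upd mdeg_move[of i n j a] unfolding mons_deg_def by simp
qed

lemma finite_mons_deg: "finite (mons_deg n d)"
proof -
  let ?f = "\<lambda>xs i. if i < n then xs ! i else (0::nat)"
  have "mons_deg n d \<subseteq> ?f ` {xs. set xs \<subseteq> {..d} \<and> length xs = n}"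
  proof
    fix a assume a: "a \<in> mons_deg n d"
    have "set (map a [0..<n]) \<subseteq> {..d}"
      using a exponent_le_mdeg[of _ n a] unfolding mons_deg_def by auto
    moreover have "?f (map a [0..<n]) = a"
      using a unfolding mons_deg_def mons_def by (auto simp: fun_eq_iff)
    ultimately show "a \<in> ?f ` {xs. set xs \<subseteq> {..d} \<and> length xs = n}"
      by (intro image_eqI[where x="map a [0..<n]"]) auto
  qed
  moreover have "finite (?f ` {xs. set xs \<subseteq> {..d} \<and> length xs = n})"
    by (intro finite_imageI finite_lists_length_eq) auto
  ultimately show ?thesis by (rule finite_subset)
qed

lemma finite_subset_mons_deg: "A \<subseteq> mons_deg n d \<Longrightarrow> finite A"
  using finite_mons_deg finite_subset by blast

lemma card_subset_mons_deg: "A \<subseteq> mons_deg n d \<Longrightarrow> card A \<le> card (mons_deg n d)"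
  by (rule card_mono[OF finite_mons_deg])

lemma mdvd_refl: "mdvd a a"
  unfolding mdvd_def by simp

lemma mdvd_mdeg: "mdvd a b \<Longrightarrow> mdeg n a \<le> mdeg n b"
  unfolding mdvd_def mdeg_def by (intro sum_mono) auto

lemma mdvd_mdeg_eq:
  assumes "mdvd a b" "a \<in> mons n" "b \<in> mons n" "mdeg n a = mdeg n b" shows "a = b"
proof (rule ccontr)
  assume "a \<noteq> b"
  then obtain j where j: "a j \<noteq> b j" by auto
  have jn: "j < n"
  proof (rule ccontr)
    assume "\<not> j < n" then show False using j assms(2,3) unfolding mons_def by simp
  qed
  have "a j < b j" using j assms(1) unfolding mdvd_def by (simp add: le_neq_implies_less)
  then have "mdeg n a < mdeg n b" unfolding mdeg_def using assms(1) jn unfolding mdvd_def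
    by (intro sum_strict_mono_ex1) auto
  then show False using assms(4) by simp
qed

lemma mdvd_mdeg_less:
  assumes "mdvd a b" "a \<in> mons n" "b \<in> mons n" "mdeg n a < mdeg n b" obtains i where "a i < b i"
  using assms mdvd_mdeg[of b a n] unfolding mdvd_def by (meson le_antisym not_le)

lemma gen_ideal_subset_mons: "gen_ideal n G \<subseteq> mons n"
  unfolding gen_ideal_def by auto

lemma monomial_ideal_gen_ideal: "monomial_ideal n (gen_ideal n G)"
  unfolding monomial_ideal_def gen_ideal_def mdvd_def by (auto intro: le_trans)

lemma monomial_idealD:
  "monomial_ideal n I \<Longrightarrow> a \<in> I \<Longrightarrow> b \<in> mons n \<Longrightarrow> mdvd a b \<Longrightarrow> b \<in> I"
  unfolding monomial_ideal_def by blast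

definition std_mons :: "nat \<Rightarrow> (nat \<Rightarrow> nat) set \<Rightarrow> nat \<Rightarrow> (nat \<Rightarrow> nat) set" where
  "std_mons n I d = {a \<in> mons_deg n d. a \<notin> I}"

lemma hilb_eq_card_std_mons: "hilb n I d = card (std_mons n I d)"
  unfolding hilb_def std_mons_def ..

lemma finite_std_mons: "finite (std_mons n I d)"
  unfolding std_mons_def using finite_mons_deg by simp

lemma shift_last_inj: "inj_on (\<lambda>a. a(p := Suc (a p))) X"
  by (rule inj_onI) (metis fun_upd_same fun_upd_upd nat.inject fun_upd_triv)

section \<open>Lex segments and their shadows\<close>

lemma lex_gt_irrefl: "\<not> lex_gt a a"
  unfolding lex_gt_def by auto

lemma lex_gt_trans: assumes "lex_gt a b" "lex_gt b c" shows "lex_gt a c"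
proof -
  obtain i where i: "\<forall>j<i. a j = b j" "a i > b i" using assms(1) unfolding lex_gt_def by auto
  obtain k where k: "\<forall>j<k. b j = c j" "b k > c k" using assms(2) unfolding lex_gt_def by auto
  show ?thesis unfolding lex_gt_def
  proof (cases "i \<le> k")
    case True
    have "\<forall>j<i. a j = c j" using i k True by simp
    moreover have "c i < a i" using i k True by (cases "i = k") auto
    ultimately show "\<exists>i. (\<forall>j<i. a j = c j) \<and> c i < a i" by blast
  next
    case False
    then have "\<forall>j<k. a j = c j" "c k < a k" using i k by simp_all
    then show "\<exists>i. (\<forall>j<i. a j = c j) \<and> c i < a i" by blast
  qed
qed

lemma lex_gt_total: assumes "a \<noteq> b" shows "lex_gt a b \<or> lex_gt b a"
proof -
  obtain j where "a j \<noteq> b j" using assms by auto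
  define i where "i = (LEAST j. a j \<noteq> b j)"
  have i: "a i \<noteq> b i" unfolding i_def by (rule LeastI) fact
  have "\<forall>j<i. a j = b j" unfolding i_def using not_less_Least by blast
  then show ?thesis using i unfolding lex_gt_def by (metis linorder_neqE_nat)
qed

lemma lex_gt_move: "i < j \<Longrightarrow> lex_gt ((a(j := a j - 1))(i := a i + 1)) a"
  unfolding lex_gt_def by (rule exI[of _ i]) simp

lemma finite_linear_order_lex: "finite_linear_order_on lex_gt (mons_deg m d)"
  unfolding finite_linear_order_on_def
  using finite_mons_deg lex_gt_irrefl lex_gt_trans lex_gt_total by blast

definition lex_initial :: "nat \<Rightarrow> nat \<Rightarrow> nat \<Rightarrow> (nat \<Rightarrow> nat) set" where
  "lex_initial m d k = {a \<in> mons_deg m d. order_rank lex_gt (mons_deg m d) a < k}"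

lemma lex_seg_eq_lex_initial: "lex_seg m g d = lex_initial m d (card (mons_deg m d) - g d)"
  unfolding lex_seg_def lex_initial_def order_rank_def by simp

lemma card_lex_initial: "card (lex_initial m d k) = min k (card (mons_deg m d))"
  unfolding lex_initial_def by (rule card_order_rank_less[OF finite_linear_order_lex])

lemma lex_initial_subset: "lex_initial m d k \<subseteq> mons_deg m d"
  unfolding lex_initial_def by auto

lemma lex_initial_mono: "k \<le> k' \<Longrightarrow> lex_initial m d k \<subseteq> lex_initial m d k'"
  unfolding lex_initial_def by auto

lemma lex_initial_upward:
  "a \<in> lex_initial m d k \<Longrightarrow> b \<in> mons_deg m d \<Longrightarrow> lex_gt b a \<Longrightarrow> b \<in> lex_initial m d k"
  unfolding lex_initial_def using order_rank_less_upward[OF finite_linear_order_lex] by blast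

lemma upward_closed_eq_lex_initial:
  "X \<subseteq> mons_deg m d \<Longrightarrow> \<forall>a\<in>X. \<forall>b\<in>mons_deg m d. lex_gt b a \<longrightarrow> b \<in> X
   \<Longrightarrow> X = lex_initial m d (card X)"
  unfolding lex_initial_def by (rule upward_closed_eq_order_rank_less[OF finite_linear_order_lex])

lemma lex_initial_all: "card (mons_deg m d) \<le> k \<Longrightarrow> lex_initial m d k = mons_deg m d"
  using card_lex_initial[of m d k] lex_initial_subset[of m d k] finite_mons_deg
  by (metis card_subset_eq min.absorb2)

lemma lex_initial_move:
  "a \<in> lex_initial m d k \<Longrightarrow> i < j \<Longrightarrow> 0 < a j \<Longrightarrow> (a(j := a j - 1))(i := a i + 1) \<in> lex_initial m d k"
  by (rule lex_initial_upward[OF _ mons_deg_move lex_gt_move]) (use lex_initial_subset in blast)+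

definition shadow :: "nat \<Rightarrow> (nat \<Rightarrow> nat) set \<Rightarrow> (nat \<Rightarrow> nat) set" where
  "shadow m A = {b. \<exists>a\<in>A. \<exists>i<m. b = a(i := Suc (a i))}"

lemma shadowI: "a \<in> A \<Longrightarrow> i < m \<Longrightarrow> a(i := Suc (a i)) \<in> shadow m A"
  unfolding shadow_def by blast

lemma shadowE:
  "b \<in> shadow m A \<Longrightarrow> (\<And>a i. a \<in> A \<Longrightarrow> i < m \<Longrightarrow> b = a(i := Suc (a i)) \<Longrightarrow> P) \<Longrightarrow> P"
  unfolding shadow_def by blast

lemma shadow_mono: "A \<subseteq> B \<Longrightarrow> shadow m A \<subseteq> shadow m B"
  unfolding shadow_def by blast

lemma shadow_subset_mons_deg:
  assumes "A \<subseteq> mons_deg m d" shows "shadow m A \<subseteq> mons_deg m (Suc d)"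
proof
  fix b assume "b \<in> shadow m A"
  then obtain a i where a: "a \<in> A" "i < m" "b = a(i := Suc (a i))" by (rule shadowE)
  then show "b \<in> mons_deg m (Suc d)"
    using assms mons_fun_upd mdeg_incr unfolding mons_deg_def by auto
qed

lemma finite_shadow: "finite A \<Longrightarrow> finite (shadow m A)"
proof -
  have "shadow m A = (\<lambda>(a, i). a(i := Suc (a i))) ` (A \<times> {..<m})"
    unfolding shadow_def by auto
  then show "finite A \<Longrightarrow> finite (shadow m A)" by simp
qed

lemma shadow_empty_vars: "shadow 0 A = {}"
  unfolding shadow_def by simp

lemma shadow_subset_monomial_ideal:
  assumes "monomial_ideal m J"
  shows "shadow m (J \<inter> mons_deg m e) \<subseteq> J \<inter> mons_deg m (Suc e)"
proof
  fix b assume b: "b \<in> shadow m (J \<inter> mons_deg m e)"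
  then obtain a i where a: "a \<in> J" "b = a(i := Suc (a i))" by (rule shadowE) blast
  have "b \<in> mons_deg m (Suc e)" using shadow_subset_mons_deg b by blast
  moreover have "mdvd a b" unfolding mdvd_def using a(2) by simp
  ultimately show "b \<in> J \<inter> mons_deg m (Suc e)"
    using monomial_idealD[OF assms a(1)] unfolding mons_deg_def by blast
qed

definition last_var :: "(nat \<Rightarrow> nat) \<Rightarrow> nat" where
  "last_var b = Max {j. 0 < b j}"

lemma last_var:
  assumes b: "b \<in> mons m" and q: "0 < b q"
  shows le_last_var: "q \<le> last_var b" and last_var_pos: "0 < b (last_var b)"
    and last_var_less: "last_var b < m" and above_last_var: "last_var b < j \<Longrightarrow> b j = 0"
proof -
  have "{j. 0 < b j} \<subseteq> {..<m}" using mons_exponent_pos[OF b] by fastforce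
  then have fin: "finite {j. 0 < b j}" by (rule finite_subset) simp
  have qP: "q \<in> {j. 0 < b j}" using q by simp
  show "q \<le> last_var b" unfolding last_var_def using Max_ge[OF fin qP] .
  have "last_var b \<in> {j. 0 < b j}" unfolding last_var_def using Max_in[OF fin] qP by blast
  then show pos: "0 < b (last_var b)" by simp
  then show "last_var b < m" using mons_exponent_pos[OF b] by simp
  show "last_var b < j \<Longrightarrow> b j = 0"
    unfolding last_var_def using Max_ge[OF fin, of j] by (cases "b j") auto
qed

lemma lex_ge_div_last_var:
  assumes a: "a \<in> mons_deg m d" and b: "b = a(i := Suc (a i))"
    and b': "b' \<in> mons_deg m (Suc d)" and gt: "lex_gt b' b"
  defines "r \<equiv> last_var b'"
  shows "b'(r := b' r - 1) = a \<or> lex_gt (b'(r := b' r - 1)) a"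
proof -
  define a' where "a' = b'(r := b' r - 1)"
  obtain q where q: "\<forall>j<q. b' j = b j" "b q < b' q" using gt unfolding lex_gt_def by auto
  have b'm: "b' \<in> mons m" "mdeg m b' = Suc d" using b' unfolding mons_deg_def by auto
  have qr: "q \<le> r" and br: "0 < b' r" and rm: "r < m" and above: "\<And>j. r < j \<Longrightarrow> b' j = 0"
    using last_var[OF b'm(1), of q] q(2) unfolding r_def by auto
  have a'm: "a' \<in> mons_deg m d"
    using mons_fun_upd[OF b'm(1) rm] mdeg_decr[of r m b', OF rm br] b'm(2)
    unfolding a'_def mons_deg_def by simp
  have "a' = a \<or> lex_gt a' a"
  proof (cases "i < q")
    case True
    have "\<forall>j<i. a' j = a j"
    proof (intro allI impI)
      fix j assume j: "j < i"
      then have "j \<noteq> r" "j < q" using True qr by auto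
      then show "a' j = a j" unfolding a'_def using q(1) b j by simp
    qed
    moreover have "a i < a' i" using True qr q(1) b unfolding a'_def by simp
    ultimately show ?thesis unfolding lex_gt_def by blast
  next
    case False
    have low: "\<forall>j<q. a' j = a j"
    proof (intro allI impI)
      fix j assume j: "j < q"
      then have "j \<noteq> r" "j \<noteq> i" using False qr by auto
      then show "a' j = a j" unfolding a'_def using q(1) b j by simp
    qed
    show ?thesis
    proof (cases "a q < a' q")
      case True then show ?thesis using low unfolding lex_gt_def by blast
    next
      case not_less: False
      have "q = r"
        using qr not_less q(2) b unfolding a'_def by (cases "q < r") (auto split: if_splits)
      have "a' j \<le> a j" for j
      proof (cases j q rule: linorder_cases)
        case less then show ?thesis using low by simp
      next
        case equal then show ?thesis using not_less by simp
      next
        case greater then show ?thesis using above \<open>q = r\<close> unfolding a'_def by simp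
      qed
      then have "mdvd a' a" unfolding mdvd_def by blast
      then show ?thesis using mdvd_mdeg_eq[of a' a m] a'm a unfolding mons_deg_def by simp
    qed
  qed
  then show ?thesis unfolding a'_def .
qed

lemma shadow_lex_initial_upward:
  assumes b: "b \<in> shadow m (lex_initial m d k)" and b': "b' \<in> mons_deg m (Suc d)"
    and gt: "lex_gt b' b"
  shows "b' \<in> shadow m (lex_initial m d k)"
proof -
  obtain a i where a: "a \<in> lex_initial m d k" "b = a(i := Suc (a i))"
    using b by (rule shadowE)
  have am: "a \<in> mons_deg m d" using a(1) lex_initial_subset by blast
  define r where "r = last_var b'"
  define a' where "a' = b'(r := b' r - 1)"
  have b'm: "b' \<in> mons m" using b' unfolding mons_deg_def by auto
  obtain q where "b q < b' q" using gt unfolding lex_gt_def by blast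
  then have "0 < b' q" by simp
  then have br: "0 < b' r" and rm: "r < m" using last_var[OF b'm] unfolding r_def by auto
  have a'm: "a' \<in> mons_deg m d"
    using mons_fun_upd[OF b'm rm] mdeg_decr[of r m b', OF rm br] b'
    unfolding a'_def mons_deg_def by simp
  have "a' = a \<or> lex_gt a' a"
    using lex_ge_div_last_var[OF am a(2) b' gt] unfolding a'_def r_def .
  then have "a' \<in> lex_initial m d k" using a(1) lex_initial_upward[OF a(1) a'm] by blast
  moreover have "b' = a'(r := Suc (a' r))" unfolding a'_def using br by (simp add: fun_eq_iff)
  ultimately show ?thesis using shadowI[OF _ rm] by metis
qed

lemma shadow_lex_initial:
  "shadow m (lex_initial m d k) = lex_initial m (Suc d) (card (shadow m (lex_initial m d k)))"
  by (rule upward_closed_eq_lex_initial[OF shadow_subset_mons_deg[OF lex_initial_subset]])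
    (use shadow_lex_initial_upward in blast)

section \<open>Macaulay's theorem by compression\<close>

text \<open>
  Fix two variables \<open>x\<^sub>i, x\<^sub>p\<close>. Monomials of a fixed degree are grouped into fibres by their
  exponents outside \<open>i, p\<close>; within a fibre a monomial is determined by its \<open>x\<^sub>p\<close>-exponent.
  The compression replaces each fibre by the one of the same size with the smallest
  \<open>x\<^sub>p\<close>-exponents.
\<close>

definition erase_exps :: "nat \<Rightarrow> nat \<Rightarrow> (nat \<Rightarrow> nat) \<Rightarrow> (nat \<Rightarrow> nat)" where
  "erase_exps i p a = a(i := 0, p := 0)"
definition fibre :: "nat \<Rightarrow> nat \<Rightarrow> (nat \<Rightarrow> nat) set \<Rightarrow> (nat \<Rightarrow> nat) \<Rightarrow> (nat \<Rightarrow> nat) set" where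
  "fibre i p X c = {a \<in> X. erase_exps i p a = c}"
definition fibre_exps :: "nat \<Rightarrow> nat \<Rightarrow> (nat \<Rightarrow> nat) set \<Rightarrow> (nat \<Rightarrow> nat) \<Rightarrow> nat set" where
  "fibre_exps i p X c = (\<lambda>a. a p) ` fibre i p X c"
definition compress :: "nat \<Rightarrow> nat \<Rightarrow> nat \<Rightarrow> nat \<Rightarrow> (nat \<Rightarrow> nat) set \<Rightarrow> (nat \<Rightarrow> nat) set" where
  "compress m d i p A = {a \<in> mons_deg m d. a p < card (fibre i p A (erase_exps i p a))}"
definition exp_sum :: "nat \<Rightarrow> (nat \<Rightarrow> nat) set \<Rightarrow> nat" where
  "exp_sum p X = (\<Sum>a\<in>X. a p)"

lemma card_eq_sum_fibres:
  assumes "finite X" "erase_exps i p ` X \<subseteq> K" "finite K"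
  shows "card X = (\<Sum>c\<in>K. card (fibre i p X c))"
proof -
  have "(\<Sum>c\<in>K. sum (\<lambda>_. 1::nat) {x \<in> X. erase_exps i p x = c}) = sum (\<lambda>_. 1) X"
    by (rule sum.group[OF assms(1,3,2)])
  then show ?thesis unfolding fibre_def by simp
qed

lemma exp_sum_eq_sum_fibres:
  assumes "finite X" "erase_exps i p ` X \<subseteq> K" "finite K"
  shows "exp_sum p X = (\<Sum>c\<in>K. exp_sum p (fibre i p X c))"
  unfolding exp_sum_def fibre_def by (rule sum.group[OF assms(1,3,2), symmetric])

lemma erase_exps_upd_other: "k \<noteq> i \<Longrightarrow> k \<noteq> p \<Longrightarrow> erase_exps i p (a(k := v)) = (erase_exps i p a)(k := v)"
  unfolding erase_exps_def by (rule ext) simp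

lemma erase_exps_upd_i: "erase_exps i p (a(i := v)) = erase_exps i p a"
  unfolding erase_exps_def by (rule ext) simp

lemma erase_exps_upd_p: "erase_exps i p (a(p := v)) = erase_exps i p a"
  unfolding erase_exps_def by (rule ext) simp

lemma erase_exps_other: "j \<noteq> i \<Longrightarrow> j \<noteq> p \<Longrightarrow> erase_exps i p a j = a j"
  unfolding erase_exps_def by simp

lemma sum_lessThan_card_le:
  "finite V \<Longrightarrow> (\<Sum>v<card V. v) \<le> (\<Sum>v\<in>V. v) \<and> (V \<noteq> {..<card V} \<longrightarrow> (\<Sum>v<card V. v) < (\<Sum>v\<in>V. v))"
proof (induction "card V" arbitrary: V)
  case 0 then show ?case by simp
next
  case (Suc n)
  then have ne: "V \<noteq> {}" by auto
  define M where "M = Max V"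
  have MV: "M \<in> V" unfolding M_def using Suc ne by simp
  define V' where "V' = V - {M}"
  have cV': "card V' = n" unfolding V'_def using Suc MV by simp
  have fV': "finite V'" unfolding V'_def using Suc by simp
  have IH: "(\<Sum>v<n. v) \<le> (\<Sum>v\<in>V'. v) \<and> (V' \<noteq> {..<n} \<longrightarrow> (\<Sum>v<n. v) < (\<Sum>v\<in>V'. v))"
    using Suc(1)[of V'] cV' fV' by simp
  have sV: "(\<Sum>v\<in>V. v) = (\<Sum>v\<in>V'. v) + M" unfolding V'_def using Suc(3) MV
    by (simp add: sum.remove[of V M])
  have sN: "(\<Sum>v<Suc n. v) = (\<Sum>v<n. v) + n" by simp
  have "V \<subseteq> {..M}" unfolding M_def using Suc(3) by auto
  then have "card V \<le> Suc M" using card_mono[of "{..M}" V] by simp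
  then have nM: "n \<le> M" using Suc(2) by simp
  have le: "(\<Sum>v<Suc n. v) \<le> (\<Sum>v\<in>V. v)" using IH sV sN nM by linarith
  moreover have "V \<noteq> {..<card V} \<longrightarrow> (\<Sum>v<card V. v) < (\<Sum>v\<in>V. v)"
  proof
    assume neq: "V \<noteq> {..<card V}"
    show "(\<Sum>v<card V. v) < (\<Sum>v\<in>V. v)"
    proof (cases "n < M")
      case True then show ?thesis using IH sV sN Suc(2) by (metis add_le_less_mono)
    next
      case False
      then have Mn: "M = n" using nM by simp
      have "V' \<noteq> {..<n}"
      proof
        assume "V' = {..<n}"
        then have "V = insert n {..<n}" unfolding V'_def using MV Mn by auto
        then have "V = {..<Suc n}" by auto
        then show False using neq Suc(2) by simp
      qed
      then show ?thesis using IH sV sN Mn Suc(2) by simp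
    qed
  qed
  ultimately show ?case using Suc(2) by simp
qed

lemma card_union_Suc_image:
  assumes "finite V" "V \<noteq> {}" shows "Suc (card V) \<le> card (V \<union> Suc ` V)"
proof -
  have "Suc (Max V) \<notin> V"
  proof
    assume "Suc (Max V) \<in> V"
    then have "Suc (Max V) \<le> Max V" using Max_ge[OF assms(1)] by blast
    then show False by simp
  qed
  moreover have "Suc (Max V) \<in> Suc ` V" using assms by simp
  ultimately have "insert (Suc (Max V)) V \<subseteq> V \<union> Suc ` V" by blast
  then have "card (insert (Suc (Max V)) V) \<le> card (V \<union> Suc ` V)"
    using assms by (intro card_mono) auto
  then show ?thesis using assms \<open>Suc (Max V) \<notin> V\<close> by simp
qed

context
  fixes m i p :: nat
  assumes ip: "i < m" "p < m" "i \<noteq> p"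
begin

lemma mdeg_erase_exps: assumes "a \<in> mons m" shows "mdeg m a = mdeg m (erase_exps i p a) + a i + a p"
proof -
  have 1: "mdeg m (a(i := 0)) + a i = mdeg m a" using mdeg_fun_upd[OF ip(1), of a 0] by simp
  have 2: "mdeg m ((a(i := 0))(p := 0)) + (a(i := 0)) p = mdeg m (a(i := 0))"
    using mdeg_fun_upd[OF ip(2), of "a(i := 0)" 0] by simp
  have 3: "(a(i := 0)) p = a p" using ip(3) by simp
  show ?thesis using 1 2 3 unfolding erase_exps_def by simp
qed

lemma erase_exps_mons: "a \<in> mons m \<Longrightarrow> erase_exps i p a \<in> mons m"
  unfolding erase_exps_def using mons_fun_upd ip by simp

lemma inj_on_fibre_exp: assumes "X \<subseteq> mons_deg m e" shows "inj_on (\<lambda>a. a p) (fibre i p X c)"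
proof (rule inj_onI)
  fix a b assume a: "a \<in> fibre i p X c" and b: "b \<in> fibre i p X c" and ab: "a p = b p"
  have am: "a \<in> mons m" "mdeg m a = e" and bm: "b \<in> mons m" "mdeg m b = e"
    using a b assms unfolding fibre_def mons_deg_def by auto
  have kk: "erase_exps i p a = erase_exps i p b" using a b unfolding fibre_def by simp
  have "a i = b i" using mdeg_erase_exps[OF am(1)] mdeg_erase_exps[OF bm(1)] am(2) bm(2) kk ab by simp
  show "a = b"
  proof
    fix j show "a j = b j"
    proof (cases "j = i \<or> j = p")
      case True then show ?thesis using \<open>a i = b i\<close> ab by auto
    next
      case False then show ?thesis using erase_exps_other[of j i p a] erase_exps_other[of j i p b] kk by metis
    qed
  qed
qed

lemma finite_fibre_exps: "finite A \<Longrightarrow> finite (fibre_exps i p A c)"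
  unfolding fibre_exps_def fibre_def by simp

lemma card_fibre_exps: "X \<subseteq> mons_deg m e \<Longrightarrow> card (fibre_exps i p X c) = card (fibre i p X c)"
  unfolding fibre_exps_def by (rule card_image[OF inj_on_fibre_exp])

lemma fibre_exps_bound: assumes "X \<subseteq> mons_deg m e" "v \<in> fibre_exps i p X c" shows "v + mdeg m c \<le> e"
proof -
  obtain a where a: "a \<in> X" "erase_exps i p a = c" "v = a p" using assms(2) unfolding fibre_exps_def fibre_def by auto
  have "a \<in> mons m" "mdeg m a = e" using a assms(1) unfolding mons_deg_def by auto
  then show ?thesis using mdeg_erase_exps[of a] a by simp
qed

lemma fibre_exps_realize:
  assumes c: "c \<in> mons m" "c i = 0" "c p = 0" and v: "v + mdeg m c \<le> e"
  defines "x \<equiv> c(i := e - mdeg m c - v, p := v)"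
  shows "x \<in> mons_deg m e" "erase_exps i p x = c" "x p = v"
proof -
  show xp: "x p = v" unfolding x_def by simp
  show kx: "erase_exps i p x = c" unfolding x_def erase_exps_def
  proof
    fix j show "(c(i := e - mdeg m c - v, p := v, i := 0, p := 0)) j = c j" using c by simp
  qed
  have xm: "x \<in> mons m" unfolding x_def using c(1) ip by (simp add: mons_fun_upd)
  have xi: "x i = e - mdeg m c - v" unfolding x_def using ip(3) by simp
  have "mdeg m x = e" using mdeg_erase_exps[OF xm] kx xi xp v by simp
  then show "x \<in> mons_deg m e" using xm unfolding mons_deg_def by simp
qed

lemma compress_subset: "compress m d i p A \<subseteq> mons_deg m d" unfolding compress_def by auto

lemma fibre_exps_compress:
  assumes A: "A \<subseteq> mons_deg m d"
  shows "fibre_exps i p (compress m d i p A) c = {..<card (fibre i p A c)}"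
proof
  show "fibre_exps i p (compress m d i p A) c \<subseteq> {..<card (fibre i p A c)}"
  proof
    fix v assume "v \<in> fibre_exps i p (compress m d i p A) c"
    then obtain x where x: "x \<in> compress m d i p A" "erase_exps i p x = c" "v = x p" unfolding fibre_exps_def fibre_def by blast
    then show "v \<in> {..<card (fibre i p A c)}" unfolding compress_def by simp
  qed
next
  show "{..<card (fibre i p A c)} \<subseteq> fibre_exps i p (compress m d i p A) c"
  proof
    fix v assume v: "v \<in> {..<card (fibre i p A c)}"
    then have "fibre i p A c \<noteq> {}" by auto
    then obtain a0 where a0: "a0 \<in> A" "erase_exps i p a0 = c" unfolding fibre_def by auto
    have a0m: "a0 \<in> mons m" "mdeg m a0 = d" using a0 A unfolding mons_deg_def by auto
    have cm: "c \<in> mons m" "c i = 0" "c p = 0" using erase_exps_mons[OF a0m(1)] a0 unfolding erase_exps_def by auto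
    have "fibre_exps i p A c \<subseteq> {..d - mdeg m c}"
    proof
      fix w assume "w \<in> fibre_exps i p A c"
      then have "w + mdeg m c \<le> d" by (rule fibre_exps_bound[OF A])
      then show "w \<in> {..d - mdeg m c}" by simp
    qed
    then have "card (fibre_exps i p A c) \<le> card {..d - mdeg m c}" by (intro card_mono) simp_all
    then have "card (fibre_exps i p A c) \<le> Suc (d - mdeg m c)" by simp
    moreover have "mdeg m c \<le> d" using mdeg_erase_exps[OF a0m(1)] a0 a0m by simp
    ultimately have vb: "v + mdeg m c \<le> d" using v card_fibre_exps[OF A] by simp
    note r = fibre_exps_realize[OF cm vb]
    let ?x = "c(i := d - mdeg m c - v, p := v)"
    have "?x \<in> compress m d i p A" unfolding compress_def using r v by simp
    then have "?x \<in> fibre i p (compress m d i p A) c" unfolding fibre_def using r by simp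
    then show "v \<in> fibre_exps i p (compress m d i p A) c" unfolding fibre_exps_def by (rule rev_image_eqI) (use r(3) in simp)
  qed
qed

lemma card_compress:
  assumes A: "A \<subseteq> mons_deg m d" shows "card (compress m d i p A) = card A"
proof -
  let ?K = "erase_exps i p ` mons_deg m d"
  have fK: "finite ?K" using finite_mons_deg by simp
  have fA: "finite A" using A finite_subset_mons_deg by blast
  have fC: "finite (compress m d i p A)" using compress_subset finite_subset_mons_deg by blast
  have iC: "erase_exps i p ` compress m d i p A \<subseteq> ?K" using compress_subset by (rule image_mono)
  have iA: "erase_exps i p ` A \<subseteq> ?K" using A by (rule image_mono)
  have "card (compress m d i p A) = (\<Sum>c\<in>?K. card (fibre i p (compress m d i p A) c))"
    by (rule card_eq_sum_fibres[OF fC iC fK])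
  also have "\<dots> = (\<Sum>c\<in>?K. card (fibre i p A c))"
  proof (rule sum.cong[OF refl])
    fix c
    have "card (fibre i p (compress m d i p A) c) = card (fibre_exps i p (compress m d i p A) c)"
      using card_fibre_exps[OF compress_subset] by simp
    also have "\<dots> = card (fibre i p A c)" using fibre_exps_compress[OF A] by simp
    finally show "card (fibre i p (compress m d i p A) c) = card (fibre i p A c)" .
  qed
  also have "\<dots> = card A" using card_eq_sum_fibres[OF fA iA fK] by simp
  finally show ?thesis .
qed

lemma compress_fixed_stable:
  assumes A: "A \<subseteq> mons_deg m d" and fx: "compress m d i p A = A" and a: "a \<in> A" and ap: "0 < a p"
  shows "(a(p := a p - 1))(i := Suc (a i)) \<in> A"
proof -
  let ?a' = "(a(p := a p - 1))(i := Suc (a i))"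
  have am: "a \<in> mons m" "mdeg m a = d" using a A unfolding mons_deg_def by auto
  have m1: "a(p := a p - 1) \<in> mons m" using mons_fun_upd[OF am(1) ip(2)] .
  have m2: "?a' \<in> mons m" using mons_fun_upd[OF m1 ip(1)] .
  have d1: "Suc (mdeg m (a(p := a p - 1))) = d" using mdeg_decr[of p m a, OF ip(2) ap] am(2) by simp
  have d2: "mdeg m ?a' = Suc (mdeg m (a(p := a p - 1)))"
    using mdeg_incr[OF ip(1), of "a(p := a p - 1)"] ip(3) by simp
  have k: "erase_exps i p ?a' = erase_exps i p a" by (simp add: erase_exps_upd_i erase_exps_upd_p)
  have "a \<in> compress m d i p A" using fx a by simp
  then have "a p < card (fibre i p A (erase_exps i p a))" unfolding compress_def by simp
  moreover have "?a' p = a p - 1" using ip(3) by simp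
  ultimately have "?a' \<in> compress m d i p A" unfolding compress_def mons_deg_def using m2 d1 d2 k ap by simp
  then show ?thesis using fx by simp
qed

lemma exp_sum_fibre: assumes "X \<subseteq> mons_deg m e" shows "exp_sum p (fibre i p X c) = (\<Sum>v\<in>fibre_exps i p X c. v)"
  unfolding exp_sum_def fibre_exps_def by (simp add: sum.reindex[OF inj_on_fibre_exp[OF assms]])

lemma subset_if_fibre_exps_subset:
  assumes X: "X \<subseteq> mons_deg m d" and Y: "Y \<subseteq> mons_deg m d"
    and sub: "\<And>x. x \<in> X \<Longrightarrow> fibre_exps i p X (erase_exps i p x) \<subseteq> fibre_exps i p Y (erase_exps i p x)"
  shows "X \<subseteq> Y"
proof
  fix x assume x: "x \<in> X"
  have "x p \<in> fibre_exps i p X (erase_exps i p x)" unfolding fibre_exps_def fibre_def using x by blast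
  then obtain y where y: "y \<in> Y" "erase_exps i p y = erase_exps i p x" "y p = x p"
    using sub[OF x] unfolding fibre_exps_def fibre_def by auto
  have "x \<in> fibre i p (mons_deg m d) (erase_exps i p x)" "y \<in> fibre i p (mons_deg m d) (erase_exps i p x)"
    using x X y Y unfolding fibre_def by auto
  then have "x = y" using inj_on_fibre_exp[of "mons_deg m d" d] y(3) unfolding inj_on_def by auto
  then show "x \<in> Y" using y by simp
qed

text \<open>The termination measure for the reduction to stable sets.\<close>

lemma exp_sum_compress_less:
  assumes A: "A \<subseteq> mons_deg m d" and ne: "compress m d i p A \<noteq> A"
  shows "exp_sum p (compress m d i p A) < exp_sum p A"
proof -
  let ?K = "erase_exps i p ` mons_deg m d"
  let ?C = "compress m d i p A"
  have fK: "finite ?K" using finite_mons_deg by simp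
  have fA: "finite A" using A finite_subset_mons_deg by blast
  have fC: "finite ?C" using compress_subset finite_subset_mons_deg by blast
  have fv: "\<And>c. finite (fibre_exps i p A c)" using finite_fibre_exps[OF fA] .
  have iC: "erase_exps i p ` ?C \<subseteq> ?K" using compress_subset by (rule image_mono)
  have iA: "erase_exps i p ` A \<subseteq> ?K" using A by (rule image_mono)
  have eC: "exp_sum p ?C = (\<Sum>c\<in>?K. \<Sum>v\<in>fibre_exps i p ?C c. v)"
    using exp_sum_eq_sum_fibres[OF fC iC fK] exp_sum_fibre[OF compress_subset] by simp
  have eA: "exp_sum p A = (\<Sum>c\<in>?K. \<Sum>v\<in>fibre_exps i p A c. v)"
    using exp_sum_eq_sum_fibres[OF fA iA fK] exp_sum_fibre[OF A] by simp
  have vC: "\<And>c. fibre_exps i p ?C c = {..<card (fibre_exps i p A c)}"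
    using fibre_exps_compress[OF A] card_fibre_exps[OF A] by simp
  have le: "\<forall>c\<in>?K. (\<Sum>v\<in>fibre_exps i p ?C c. v) \<le> (\<Sum>v\<in>fibre_exps i p A c. v)"
    using vC sum_lessThan_card_le[OF fv] by simp
  have "\<exists>c\<in>?K. fibre_exps i p A c \<noteq> {..<card (fibre_exps i p A c)}"
  proof (rule ccontr)
    assume "\<not> ?thesis"
    then have eqv: "\<forall>c\<in>?K. fibre_exps i p A c = fibre_exps i p ?C c" using vC by simp
    have "A \<subseteq> ?C"
      by (rule subset_if_fibre_exps_subset[OF A compress_subset]) (use A eqv in blast)
    moreover have "?C \<subseteq> A"
      by (rule subset_if_fibre_exps_subset[OF compress_subset A]) (use compress_subset eqv in blast)
    ultimately show False using ne by simp
  qed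
  then obtain c where c: "c \<in> ?K" "fibre_exps i p A c \<noteq> {..<card (fibre_exps i p A c)}" by blast
  have "(\<Sum>v\<in>fibre_exps i p ?C c. v) < (\<Sum>v\<in>fibre_exps i p A c. v)"
    using vC sum_lessThan_card_le[OF fv] c(2) by simp
  then have "(\<Sum>c\<in>?K. \<Sum>v\<in>fibre_exps i p ?C c. v) < (\<Sum>c\<in>?K. \<Sum>v\<in>fibre_exps i p A c. v)"
    using le c(1) fK by (intro sum_strict_mono_ex1) auto
  then show ?thesis using eC eA by simp
qed

lemma fibre_exps_shadow_i: "fibre_exps i p A c \<subseteq> fibre_exps i p (shadow m A) c"
proof
  fix v assume "v \<in> fibre_exps i p A c"
  then obtain x where x: "x \<in> A" "erase_exps i p x = c" "v = x p" unfolding fibre_exps_def fibre_def by blast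
  let ?y = "x(i := Suc (x i))"
  have "?y \<in> shadow m A" using shadowI[OF x(1) ip(1)] .
  moreover have "erase_exps i p ?y = c" using x(2) erase_exps_upd_i by metis
  ultimately have "?y \<in> fibre i p (shadow m A) c" unfolding fibre_def by simp
  moreover have "v = ?y p" using x(3) ip(3) by simp
  ultimately show "v \<in> fibre_exps i p (shadow m A) c" unfolding fibre_exps_def by blast
qed

lemma fibre_exps_shadow_p: "Suc ` fibre_exps i p A c \<subseteq> fibre_exps i p (shadow m A) c"
proof
  fix w assume "w \<in> Suc ` fibre_exps i p A c"
  then obtain v where v: "v \<in> fibre_exps i p A c" "w = Suc v" by blast
  then obtain x where x: "x \<in> A" "erase_exps i p x = c" "v = x p" unfolding fibre_exps_def fibre_def by blast
  let ?y = "x(p := Suc (x p))"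
  have "?y \<in> shadow m A" using shadowI[OF x(1) ip(2)] .
  moreover have "erase_exps i p ?y = c" using x(2) erase_exps_upd_p by metis
  ultimately have "?y \<in> fibre i p (shadow m A) c" unfolding fibre_def by simp
  moreover have "w = ?y p" using x(3) v(2) by simp
  ultimately show "w \<in> fibre_exps i p (shadow m A) c" unfolding fibre_exps_def by blast
qed

lemma fibre_exps_shadow_other:
  assumes k: "k < m" "k \<noteq> i" "k \<noteq> p"
  shows "fibre_exps i p A c \<subseteq> fibre_exps i p (shadow m A) (c(k := Suc (c k)))"
proof
  fix v assume "v \<in> fibre_exps i p A c"
  then obtain x where x: "x \<in> A" "erase_exps i p x = c" "v = x p" unfolding fibre_exps_def fibre_def by blast
  let ?y = "x(k := Suc (x k))"
  have "?y \<in> shadow m A" using shadowI[OF x(1) k(1)] .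
  moreover have "erase_exps i p ?y = c(k := Suc (c k))"
  proof -
    have "erase_exps i p ?y = (erase_exps i p x)(k := Suc (x k))" using erase_exps_upd_other[OF k(2,3)] .
    moreover have "c k = x k" using x(2) erase_exps_other[OF k(2,3), of x] by simp
    ultimately show ?thesis using x(2) by simp
  qed
  ultimately have "?y \<in> fibre i p (shadow m A) (c(k := Suc (c k)))" unfolding fibre_def by simp
  moreover have "v = ?y p" using x(3) k(3) by simp
  ultimately show "v \<in> fibre_exps i p (shadow m A) (c(k := Suc (c k)))" unfolding fibre_exps_def by blast
qed

lemma card_fibre_exps_shadow_le:
  "finite A \<Longrightarrow> card (fibre_exps i p A c) \<le> card (fibre_exps i p (shadow m A) c)"
  using fibre_exps_shadow_i by (intro card_mono finite_fibre_exps finite_shadow)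

lemma card_fibre_exps_shadow_Suc:
  assumes "finite A" "fibre_exps i p A c \<noteq> {}"
  shows "Suc (card (fibre_exps i p A c)) \<le> card (fibre_exps i p (shadow m A) c)"
proof -
  have "Suc (card (fibre_exps i p A c)) \<le> card (fibre_exps i p A c \<union> Suc ` fibre_exps i p A c)"
    using card_union_Suc_image[OF finite_fibre_exps[OF assms(1)] assms(2)] .
  also have "\<dots> \<le> card (fibre_exps i p (shadow m A) c)"
    using fibre_exps_shadow_i fibre_exps_shadow_p
    by (intro card_mono finite_fibre_exps finite_shadow assms(1)) auto
  finally show ?thesis .
qed

lemma fibre_exps_shadow_compress:
  assumes A: "A \<subseteq> mons_deg m d"
  shows "fibre_exps i p (shadow m (compress m d i p A)) c \<subseteq> {..<card (fibre_exps i p (shadow m A) c)}"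
proof
  fix v assume "v \<in> fibre_exps i p (shadow m (compress m d i p A)) c"
  then obtain b where b: "b \<in> shadow m (compress m d i p A)" "erase_exps i p b = c" "v = b p"
    unfolding fibre_exps_def fibre_def by blast
  obtain a k where a: "a \<in> compress m d i p A" "k < m" "b = a(k := Suc (a k))"
    using b(1) by (rule shadowE)
  have aA: "a p < card (fibre_exps i p A (erase_exps i p a))"
    using a(1) card_fibre_exps[OF A] unfolding compress_def by simp
  have fA: "finite A" using A finite_subset_mons_deg by blast
  consider "k = i" | "k = p" | "k \<noteq> i" "k \<noteq> p" by blast
  then show "v \<in> {..<card (fibre_exps i p (shadow m A) c)}"
  proof cases
    case 1
    then have "erase_exps i p a = c" "v = a p" using b(2,3) a(3) erase_exps_upd_i ip(3) by auto
    then show ?thesis using aA card_fibre_exps_shadow_le[OF fA] by (metis lessThan_iff order_less_le_trans)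
  next
    case 2
    then have "erase_exps i p a = c" "v = Suc (a p)" using b(2,3) a(3) erase_exps_upd_p by auto
    then show ?thesis using aA card_fibre_exps_shadow_Suc[OF fA, of c] by fastforce
  next
    case 3
    have "erase_exps i p b = (erase_exps i p a)(k := Suc (a k))"
      using a(3) erase_exps_upd_other[OF 3] by simp
    then have c: "c = (erase_exps i p a)(k := Suc ((erase_exps i p a) k))"
      using b(2) erase_exps_other[OF 3] by simp
    have "card (fibre_exps i p A (erase_exps i p a)) \<le> card (fibre_exps i p (shadow m A) c)"
      using fibre_exps_shadow_other[OF a(2) 3, of A "erase_exps i p a"] c
      by (intro card_mono finite_fibre_exps finite_shadow fA) auto
    moreover have "v = a p" using b(3) a(3) 3 by simp
    ultimately show ?thesis using aA by simp
  qed
qed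

lemma card_shadow_compress:
  assumes A: "A \<subseteq> mons_deg m d"
  shows "card (shadow m (compress m d i p A)) \<le> card (shadow m A)"
proof -
  let ?C = "compress m d i p A"
  let ?SA = "shadow m A"
  let ?SC = "shadow m ?C"
  have SA: "?SA \<subseteq> mons_deg m (Suc d)" using shadow_subset_mons_deg[OF A] .
  have SC: "?SC \<subseteq> mons_deg m (Suc d)" using shadow_subset_mons_deg[OF compress_subset] .
  have fSA: "finite ?SA" using SA finite_subset_mons_deg by blast
  have fSC: "finite ?SC" using SC finite_subset_mons_deg by blast
  let ?K = "erase_exps i p ` mons_deg m (Suc d)"
  have fK: "finite ?K" using finite_mons_deg by simp
  have key: "\<And>c. fibre_exps i p ?SC c \<subseteq> {..<card (fibre_exps i p ?SA c)}"
    using fibre_exps_shadow_compress[OF A] by simp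
  have iC: "erase_exps i p ` ?SC \<subseteq> ?K" using SC by (rule image_mono)
  have iA: "erase_exps i p ` ?SA \<subseteq> ?K" using SA by (rule image_mono)
  have "card ?SC = (\<Sum>c\<in>?K. card (fibre i p ?SC c))" by (rule card_eq_sum_fibres[OF fSC iC fK])
  also have "\<dots> = (\<Sum>c\<in>?K. card (fibre_exps i p ?SC c))" using card_fibre_exps[OF SC] by simp
  also have "\<dots> \<le> (\<Sum>c\<in>?K. card (fibre_exps i p ?SA c))"
  proof (rule sum_mono)
    fix c show "card (fibre_exps i p ?SC c) \<le> card (fibre_exps i p ?SA c)"
      using card_mono[OF _ key[of c]] by simp
  qed
  also have "\<dots> = (\<Sum>c\<in>?K. card (fibre i p ?SA c))" using card_fibre_exps[OF SA] by simp
  also have "\<dots> = card ?SA" by (rule card_eq_sum_fibres[OF fSA iA fK, symmetric])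
  finally show ?thesis .
qed

end


text \<open>
  In \<open>K[x\<^sub>0,\<dots>,x\<^sub>p]\<close>, a set is \<open>shift_stable\<close> if replacing a factor \<open>x\<^sub>p\<close> by any \<open>x\<^sub>i\<close> keeps
  it in the set. The shadow of such a set splits along \<open>x\<^sub>p\<close>, which gives the induction on the
  number of variables in Macaulay's theorem.
\<close>

definition shift_stable :: "nat \<Rightarrow> (nat \<Rightarrow> nat) set \<Rightarrow> bool" where
  "shift_stable p A \<longleftrightarrow> (\<forall>a\<in>A. 0 < a p \<longrightarrow> (\<forall>i<p. (a(p := a p - 1))(i := Suc (a i)) \<in> A))"
definition lex_shadow_minimal :: "nat \<Rightarrow> nat \<Rightarrow> (nat \<Rightarrow> nat) set \<Rightarrow> bool" where
  "lex_shadow_minimal m d A \<longleftrightarrow> card (shadow m (lex_initial m d (card A))) \<le> card (shadow m A)"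
definition free_of :: "nat \<Rightarrow> (nat \<Rightarrow> nat) set \<Rightarrow> (nat \<Rightarrow> nat) set" where
  "free_of p X = {a \<in> X. a p = 0}"
definition colon_last :: "nat \<Rightarrow> nat \<Rightarrow> (nat \<Rightarrow> nat) set \<Rightarrow> (nat \<Rightarrow> nat) set" where
  "colon_last p d X = {c \<in> mons_deg (Suc p) d. c(p := Suc (c p)) \<in> X}"

lemma mdeg_Suc_vars: "mdeg (Suc p) a = mdeg p a + a p"
  unfolding mdeg_def by simp

lemma mons_Suc_vars_free: "a \<in> mons (Suc p) \<Longrightarrow> a p = 0 \<Longrightarrow> a \<in> mons p"
proof -
  assume a: "a \<in> mons (Suc p)" "a p = 0"
  have "\<forall>i\<ge>p. a i = 0"
  proof (intro allI impI)
    fix i assume "p \<le> i"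
    then have "i = p \<or> Suc p \<le> i" by auto
    then show "a i = 0" using a unfolding mons_def by auto
  qed
  then show "a \<in> mons p" unfolding mons_def by simp
qed

lemma mons_deg_eq_last_exp_zero: "mons_deg p d = {a \<in> mons_deg (Suc p) d. a p = 0}"
proof
  show "mons_deg p d \<subseteq> {a \<in> mons_deg (Suc p) d. a p = 0}"
  proof
    fix a assume a: "a \<in> mons_deg p d"
    then have am: "a \<in> mons p" "mdeg p a = d" unfolding mons_deg_def by auto
    have "a p = 0" using am(1) unfolding mons_def by simp
    moreover have "a \<in> mons (Suc p)" using am(1) unfolding mons_def by simp
    ultimately show "a \<in> {a \<in> mons_deg (Suc p) d. a p = 0}" using am(2) mdeg_Suc_vars[of p a]
      unfolding mons_deg_def by simp
  qed
next
  show "{a \<in> mons_deg (Suc p) d. a p = 0} \<subseteq> mons_deg p d"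
  proof
    fix a assume a: "a \<in> {a \<in> mons_deg (Suc p) d. a p = 0}"
    then have "a \<in> mons (Suc p)" "mdeg (Suc p) a = d" "a p = 0" unfolding mons_deg_def by auto
    then show "a \<in> mons_deg p d" using mons_Suc_vars_free mdeg_Suc_vars[of p a] unfolding mons_deg_def by simp
  qed
qed

lemma free_of_subset: "X \<subseteq> mons_deg (Suc p) d \<Longrightarrow> free_of p X \<subseteq> mons_deg p d"
  unfolding free_of_def using mons_deg_eq_last_exp_zero by blast

text \<open>For stable \<open>X\<close>, a product \<open>a x\<^sub>k\<close> with \<open>x\<^sub>p | a\<close> and \<open>k < p\<close> is also \<open>(a x\<^sub>k / x\<^sub>p) x\<^sub>p\<close>.\<close>

lemma shadow_shift_stable_eq:
  assumes st: "shift_stable p X"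
  shows "shadow (Suc p) X = shadow p (free_of p X) \<union> (\<lambda>a. a(p := Suc (a p))) ` X"
    (is "_ = _ \<union> ?up ` X")
proof
  show "shadow (Suc p) X \<subseteq> shadow p (free_of p X) \<union> ?up ` X"
  proof
    fix b assume "b \<in> shadow (Suc p) X"
    then obtain a k where a: "a \<in> X" "k < Suc p" "b = a(k := Suc (a k))" by (rule shadowE)
    show "b \<in> shadow p (free_of p X) \<union> ?up ` X"
    proof (cases "k = p")
      case True then show ?thesis using a by blast
    next
      case False
      then have kp: "k < p" using a(2) by simp
      show ?thesis
      proof (cases "a p = 0")
        case True
        then have "a \<in> free_of p X" unfolding free_of_def using a by simp
        then show ?thesis using shadowI[OF _ kp] a(3) by blast
      next
        case False
        let ?a' = "(a(p := a p - 1))(k := Suc (a k))"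
        have "?a' \<in> X" using st a(1) False kp unfolding shift_stable_def by blast
        moreover have "b = ?up ?a'"
        proof
          fix j show "b j = (?up ?a') j"
            using a(3) False kp by (cases "j = p"; cases "j = k") auto
        qed
        ultimately show ?thesis by blast
      qed
    qed
  qed
next
  show "shadow p (free_of p X) \<union> ?up ` X \<subseteq> shadow (Suc p) X"
  proof
    fix b assume "b \<in> shadow p (free_of p X) \<union> ?up ` X"
    then show "b \<in> shadow (Suc p) X"
    proof
      assume "b \<in> shadow p (free_of p X)"
      then obtain a k where "a \<in> free_of p X" "k < p" "b = a(k := Suc (a k))" by (rule shadowE)
      then show ?thesis using shadowI[of a X k "Suc p"] unfolding free_of_def by simp
    next
      assume "b \<in> ?up ` X"
      then show ?thesis using shadowI[of _ X p "Suc p"] by auto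
    qed
  qed
qed

lemma card_shadow_shift_stable:
  assumes X: "X \<subseteq> mons_deg (Suc p) d" and st: "shift_stable p X"
  shows "card (shadow (Suc p) X) = card (shadow p (free_of p X)) + card X"
proof -
  let ?up = "\<lambda>a. a(p := Suc (a p))"
  have disj: "shadow p (free_of p X) \<inter> ?up ` X = {}"
  proof -
    { fix b assume b1: "b \<in> shadow p (free_of p X)" and b2: "b \<in> ?up ` X"
      obtain a k where a: "a \<in> free_of p X" "k < p" "b = a(k := Suc (a k))" using b1 by (rule shadowE)
      have "b p = 0" using a unfolding free_of_def by simp
      moreover have "b p > 0" using b2 by auto
      ultimately have False by simp }
    then show ?thesis by blast
  qed
  have fX: "finite X" using X finite_subset_mons_deg by blast
  have f1: "finite (shadow p (free_of p X))" using finite_shadow[of "free_of p X"] fX unfolding free_of_def by simp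
  have "card (shadow (Suc p) X) = card (shadow p (free_of p X)) + card (?up ` X)"
    unfolding shadow_shift_stable_eq[OF st] by (rule card_Un_disjoint[OF f1 _ disj]) (use fX in simp)
  also have "card (?up ` X) = card X" by (rule card_image[OF shift_last_inj])
  finally show ?thesis .
qed

lemma shift_stable_lex_initial: "shift_stable p (lex_initial (Suc p) d k)"
  unfolding shift_stable_def
proof (intro ballI impI allI)
  fix a i assume a: "a \<in> lex_initial (Suc p) d k" and ap: "0 < a p" and ip: "i < p"
  let ?a' = "(a(p := a p - 1))(i := Suc (a i))"
  have am: "a \<in> mons (Suc p)" "mdeg (Suc p) a = d" using a lex_initial_subset unfolding mons_deg_def by auto
  have p1: "p < Suc p" by simp
  have i1: "i < Suc p" using ip by simp
  have m1: "a(p := a p - 1) \<in> mons (Suc p)" using mons_fun_upd[OF am(1) p1] .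
  have m2: "?a' \<in> mons (Suc p)" using mons_fun_upd[OF m1 i1] .
  have d1: "Suc (mdeg (Suc p) (a(p := a p - 1))) = d" using mdeg_decr[of p "Suc p" a, OF p1 ap] am(2) by simp
  have d2: "mdeg (Suc p) ?a' = Suc (mdeg (Suc p) (a(p := a p - 1)))"
    using mdeg_incr[OF i1, of "a(p := a p - 1)"] ip by simp
  have a'm: "?a' \<in> mons_deg (Suc p) d" using m2 d1 d2 unfolding mons_deg_def by simp
  have l1: "\<forall>j<i. ?a' j = a j" using ip by simp
  have l2: "a i < ?a' i" by simp
  have "lex_gt ?a' a" unfolding lex_gt_def using l1 l2 by blast
  then show "?a' \<in> lex_initial (Suc p) d k" using lex_initial_upward[OF a a'm] by simp
qed

lemma free_of_lex_initial: "free_of p (lex_initial (Suc p) d k) = lex_initial p d (card (free_of p (lex_initial (Suc p) d k)))"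
proof (rule upward_closed_eq_lex_initial)
  show "free_of p (lex_initial (Suc p) d k) \<subseteq> mons_deg p d" using free_of_subset[OF lex_initial_subset] .
  show "\<forall>a\<in>free_of p (lex_initial (Suc p) d k). \<forall>b\<in>mons_deg p d. lex_gt b a \<longrightarrow> b \<in> free_of p (lex_initial (Suc p) d k)"
  proof (intro ballI impI)
    fix a b assume a: "a \<in> free_of p (lex_initial (Suc p) d k)" and b: "b \<in> mons_deg p d" and gt: "lex_gt b a"
    have "b \<in> {a \<in> mons_deg (Suc p) d. a p = 0}" using b by (subst (asm) mons_deg_eq_last_exp_zero) simp
    then have b1: "b \<in> mons_deg (Suc p) d" "b p = 0" by simp_all
    have "b \<in> lex_initial (Suc p) d k" using lex_initial_upward[OF _ b1(1) gt] a unfolding free_of_def by simp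
    then show "b \<in> free_of p (lex_initial (Suc p) d k)" using b1 unfolding free_of_def by simp
  qed
qed

lemma card_split_last:
  assumes X: "X \<subseteq> mons_deg (Suc p) (Suc d)"
  shows "card X = card (free_of p X) + card (colon_last p d X)"
proof -
  let ?up = "\<lambda>a. a(p := Suc (a p))"
  have p1: "p < Suc p" by simp
  have eq: "X = free_of p X \<union> ?up ` colon_last p d X"
  proof
    show "X \<subseteq> free_of p X \<union> ?up ` colon_last p d X"
    proof
      fix a assume a: "a \<in> X"
      show "a \<in> free_of p X \<union> ?up ` colon_last p d X"
      proof (cases "a p = 0")
        case True then show ?thesis using a unfolding free_of_def by simp
      next
        case False
        let ?c = "a(p := a p - 1)"
        have am: "a \<in> mons (Suc p)" "mdeg (Suc p) a = Suc d" using a X unfolding mons_deg_def by auto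
        have "?c \<in> mons (Suc p)" using mons_fun_upd[OF am(1) p1] .
        moreover have "Suc (mdeg (Suc p) ?c) = Suc d" using mdeg_decr[of p "Suc p" a, OF p1] False am(2) by simp
        ultimately have cm: "?c \<in> mons_deg (Suc p) d" unfolding mons_deg_def by simp
        have ua: "?up ?c = a"
        proof
          fix j show "?up ?c j = a j" using False by (cases "j = p") simp_all
        qed
        then have "?c \<in> colon_last p d X" unfolding colon_last_def using cm a by simp
        then have "?up ?c \<in> ?up ` colon_last p d X" by (rule imageI)
        then show ?thesis using ua by simp
      qed
    qed
  next
    show "free_of p X \<union> ?up ` colon_last p d X \<subseteq> X" unfolding free_of_def colon_last_def by auto
  qed
  have disj: "free_of p X \<inter> ?up ` colon_last p d X = {}" unfolding free_of_def by auto
  have fX: "finite X" using X finite_subset_mons_deg by blast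
  have fq: "finite (colon_last p d X)" unfolding colon_last_def using finite_mons_deg by simp
  have "card X = card (free_of p X) + card (?up ` colon_last p d X)"
    by (subst eq, rule card_Un_disjoint[OF _ _ disj]) (use fX fq in \<open>simp_all add: free_of_def\<close>)
  also have "card (?up ` colon_last p d X) = card (colon_last p d X)" by (rule card_image[OF shift_last_inj])
  finally show ?thesis .
qed

lemma shadow_colon_last_subset: assumes st: "shift_stable p X" shows "shadow (Suc p) (colon_last p d X) \<subseteq> X"
proof
  fix b assume "b \<in> shadow (Suc p) (colon_last p d X)"
  then obtain c k where c: "c \<in> colon_last p d X" "k < Suc p" "b = c(k := Suc (c k))" by (rule shadowE)
  let ?a = "c(p := Suc (c p))"
  have aX: "?a \<in> X" using c(1) unfolding colon_last_def by simp
  show "b \<in> X"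
  proof (cases "k = p")
    case True then show ?thesis using aX c(3) by simp
  next
    case False
    then have kp: "k < p" using c(2) by simp
    have pos: "0 < ?a p" by simp
    have "\<forall>i<p. (?a(p := ?a p - 1))(i := Suc (?a i)) \<in> X"
      using st aX pos unfolding shift_stable_def by blast
    then have "(?a(p := ?a p - 1))(k := Suc (?a k)) \<in> X" using kp by blast
    moreover have "(?a(p := ?a p - 1))(k := Suc (?a k)) = b"
    proof
      fix j show "((?a(p := ?a p - 1))(k := Suc (?a k))) j = b j"
        using c(3) False by (cases "j = p"; cases "j = k") auto
    qed
    ultimately show ?thesis by simp
  qed
qed


lemma free_of_deg0: assumes "X \<subseteq> mons_deg m 0" "p < m" shows "free_of p X = X"
proof -
  { fix a assume "a \<in> X"
    then have "a p \<le> mdeg m a" "mdeg m a = 0" using assms exponent_le_mdeg[of p m a] unfolding mons_deg_def by auto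
    then have "a p = 0" by simp }
  then show ?thesis unfolding free_of_def by blast
qed

text \<open>
  For a stable set \<open>A\<close> the monomials of \<open>A : x\<^sub>p\<close> have their shadow inside \<open>A\<close>, so by
  Macaulay's theorem in degree \<open>d\<close> the lex segment of the same size does too; hence the lex
  segment of size \<open>|A|\<close> has at least as many monomials divisible by \<open>x\<^sub>p\<close> as \<open>A\<close>.
\<close>

lemma card_free_of_lex_initial_le:
  assumes IHd: "\<And>B. B \<subseteq> mons_deg (Suc p) d \<Longrightarrow> lex_shadow_minimal (Suc p) d B"
    and A: "A \<subseteq> mons_deg (Suc p) (Suc d)" and st: "shift_stable p A"
  shows "card (free_of p (lex_initial (Suc p) (Suc d) (card A))) \<le> card (free_of p A)"
proof -
  define k where "k = card A"
  define L where "L = lex_initial (Suc p) (Suc d) k"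
  define B where "B = colon_last p d A"
  have fA: "finite A" using A finite_subset_mons_deg by blast
  have cL: "card L = k"
    unfolding L_def k_def using card_lex_initial card_subset_mons_deg[OF A] by simp
  have Lsub: "L \<subseteq> mons_deg (Suc p) (Suc d)" unfolding L_def by (rule lex_initial_subset)
  have Bsub: "B \<subseteq> mons_deg (Suc p) d" unfolding B_def colon_last_def by auto
  have "card (shadow (Suc p) B) \<le> k"
    unfolding k_def B_def using card_mono[OF fA shadow_colon_last_subset[OF st]] .
  moreover have "card (shadow (Suc p) (lex_initial (Suc p) d (card B))) \<le> card (shadow (Suc p) B)"
    using IHd[OF Bsub] unfolding lex_shadow_minimal_def .
  ultimately have "card (shadow (Suc p) (lex_initial (Suc p) d (card B))) \<le> k" by simp
  then have sub: "shadow (Suc p) (lex_initial (Suc p) d (card B)) \<subseteq> L"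
    unfolding L_def by (subst shadow_lex_initial) (rule lex_initial_mono)
  have "lex_initial (Suc p) d (card B) \<subseteq> colon_last p d L"
  proof
    fix c assume c: "c \<in> lex_initial (Suc p) d (card B)"
    have "c(p := Suc (c p)) \<in> L" using shadowI[OF c, of p "Suc p"] sub by auto
    then show "c \<in> colon_last p d L" unfolding colon_last_def using c lex_initial_subset by blast
  qed
  moreover have "card (lex_initial (Suc p) d (card B)) = card B"
    using card_lex_initial[of "Suc p" d "card B"] card_subset_mons_deg[OF Bsub] by simp
  moreover have "finite (colon_last p d L)" unfolding colon_last_def using finite_mons_deg by simp
  ultimately have "card B \<le> card (colon_last p d L)" by (metis card_mono)
  moreover have "k = card (free_of p A) + card B" unfolding k_def B_def by (rule card_split_last[OF A])
  moreover have "k = card (free_of p L) + card (colon_last p d L)"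
    using card_split_last[OF Lsub] cL by simp
  ultimately show ?thesis unfolding L_def k_def by simp
qed

lemma lex_shadow_minimal_shift_stable:
  assumes IHp: "\<And>d A. A \<subseteq> mons_deg p d \<Longrightarrow> lex_shadow_minimal p d A"
    and IHd: "\<And>d' B. d = Suc d' \<Longrightarrow> B \<subseteq> mons_deg (Suc p) d' \<Longrightarrow> lex_shadow_minimal (Suc p) d' B"
    and A: "A \<subseteq> mons_deg (Suc p) d" and st: "shift_stable p A"
  shows "lex_shadow_minimal (Suc p) d A"
proof -
  define k where "k = card A"
  define L where "L = lex_initial (Suc p) d k"
  have cL: "card L = k"
    unfolding L_def k_def using card_lex_initial card_subset_mons_deg[OF A] by simp
  have Lsub: "L \<subseteq> mons_deg (Suc p) d" unfolding L_def by (rule lex_initial_subset)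
  have e1: "card (shadow (Suc p) A) = card (shadow p (free_of p A)) + k"
    unfolding k_def by (rule card_shadow_shift_stable[OF A st])
  have e2: "card (shadow (Suc p) L) = card (shadow p (free_of p L)) + k"
    using card_shadow_shift_stable[OF Lsub] shift_stable_lex_initial cL unfolding L_def by simp
  have c3: "card (free_of p L) \<le> card (free_of p A)"
  proof (cases d)
    case 0
    then have "free_of p L = L" "free_of p A = A" using free_of_deg0 Lsub A by auto
    then show ?thesis using cL k_def by simp
  next
    case (Suc d')
    then show ?thesis
      using card_free_of_lex_initial_le[OF IHd[OF Suc]] A st unfolding L_def k_def by simp
  qed
  have pzL: "free_of p L = lex_initial p d (card (free_of p L))"
    unfolding L_def by (rule free_of_lex_initial)
  have IH: "card (shadow p (lex_initial p d (card (free_of p A)))) \<le> card (shadow p (free_of p A))"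
    using IHp[OF free_of_subset[OF A]] unfolding lex_shadow_minimal_def .
  have "shadow p (free_of p L) \<subseteq> shadow p (lex_initial p d (card (free_of p A)))"
    using pzL lex_initial_mono[OF c3] shadow_mono by metis
  moreover have "finite (shadow p (lex_initial p d (card (free_of p A))))"
    using finite_shadow[OF finite_subset_mons_deg[OF lex_initial_subset]] .
  ultimately have "card (shadow p (free_of p L)) \<le> card (shadow p (lex_initial p d (card (free_of p A))))"
    by (rule card_mono[rotated])
  then have "card (shadow (Suc p) L) \<le> card (shadow (Suc p) A)" using e1 e2 IH by simp
  then show ?thesis unfolding lex_shadow_minimal_def L_def k_def .
qed

lemma lex_shadow_minimal_if_shift_stable:
  assumes st: "\<And>A. A \<subseteq> mons_deg (Suc p) d \<Longrightarrow> shift_stable p A \<Longrightarrow> lex_shadow_minimal (Suc p) d A"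
  shows "A \<subseteq> mons_deg (Suc p) d \<Longrightarrow> lex_shadow_minimal (Suc p) d A"
proof (induction "exp_sum p A" arbitrary: A rule: less_induct)
  case less
  show ?case
  proof (cases "shift_stable p A")
    case True then show ?thesis using st less.prems by simp
  next
    case False
    then obtain a i where a: "a \<in> A" "0 < a p" "i < p" "(a(p := a p - 1))(i := Suc (a i)) \<notin> A"
      unfolding shift_stable_def by blast
    have ip: "i < Suc p" "p < Suc p" "i \<noteq> p" using a(3) by auto
    have ne: "compress (Suc p) d i p A \<noteq> A"
      using compress_fixed_stable[OF ip less.prems _ a(1) a(2)] a(4) by blast
    have less_exp: "exp_sum p (compress (Suc p) d i p A) < exp_sum p A"
      by (rule exp_sum_compress_less[OF ip less.prems ne])
    have IH: "lex_shadow_minimal (Suc p) d (compress (Suc p) d i p A)"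
      using less.hyps[OF less_exp compress_subset[OF ip]] .
    have cc: "card (compress (Suc p) d i p A) = card A" by (rule card_compress[OF ip less.prems])
    have cs: "card (shadow (Suc p) (compress (Suc p) d i p A)) \<le> card (shadow (Suc p) A)"
      by (rule card_shadow_compress[OF ip less.prems])
    show ?thesis using IH cc cs unfolding lex_shadow_minimal_def by simp
  qed
qed

theorem macaulay_lex_shadow_minimal: "A \<subseteq> mons_deg m d \<Longrightarrow> lex_shadow_minimal m d A"
proof (induction m arbitrary: d A)
  case 0
  then show ?case unfolding lex_shadow_minimal_def shadow_empty_vars by simp
next
  case (Suc p)
  show ?case using Suc.prems
  proof (induction d arbitrary: A rule: less_induct)
    case (less d)
    have "lex_shadow_minimal (Suc p) d B" if "B \<subseteq> mons_deg (Suc p) d" "shift_stable p B" for B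
      by (rule lex_shadow_minimal_shift_stable[OF Suc.IH _ that]) (use less.IH in auto)
    then show ?case by (rule lex_shadow_minimal_if_shift_stable[OF _ less.prems])
  qed
qed

lemma shadow_lex_initial_ideal:
  assumes J: "monomial_ideal m J"
  shows "shadow m (lex_initial m e (card (J \<inter> mons_deg m e)))
    \<subseteq> lex_initial m (Suc e) (card (J \<inter> mons_deg m (Suc e)))"
proof -
  let ?Je = "J \<inter> mons_deg m e"
  let ?J1 = "J \<inter> mons_deg m (Suc e)"
  have sJ: "shadow m ?Je \<subseteq> ?J1" by (rule shadow_subset_monomial_ideal[OF J])
  have f1: "finite ?J1" using finite_mons_deg by simp
  have "card (shadow m (lex_initial m e (card ?Je))) \<le> card (shadow m ?Je)"
    using macaulay_lex_shadow_minimal[of ?Je m e] unfolding lex_shadow_minimal_def by simp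
  also have "\<dots> \<le> card ?J1" using card_mono[OF f1 sJ] .
  finally have c: "card (shadow m (lex_initial m e (card ?Je))) \<le> card ?J1" .
  have "shadow m (lex_initial m e (card ?Je))
      = lex_initial m (Suc e) (card (shadow m (lex_initial m e (card ?Je))))"
    by (rule shadow_lex_initial)
  also have "\<dots> \<subseteq> lex_initial m (Suc e) (card ?J1)" using lex_initial_mono[OF c] .
  finally show ?thesis .
qed

section \<open>Lex ideals of O-sequences\<close>

definition var_mon :: "nat \<Rightarrow> nat \<Rightarrow> nat" where
  "var_mon i = (\<lambda>j. if j = i then 1 else 0)"

lemma var_mon_mons_deg: "i < n \<Longrightarrow> var_mon i \<in> mons_deg n 1"
  unfolding mons_deg_def mons_def mdeg_def var_mon_def by auto

lemma inj_var_mon: "inj var_mon"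
  by (rule injI) (metis var_mon_def zero_neq_one)

lemma var_mon_mdvd: "0 < a i \<Longrightarrow> mdvd (var_mon i) a"
  unfolding mdvd_def var_mon_def by auto

lemma exists_exponent_pos:
  assumes "a \<in> mons_deg n d" "0 < d" shows "\<exists>i<n. 0 < a i"
proof (rule ccontr)
  assume "\<not> ?thesis"
  then have "mdeg n a = 0" unfolding mdeg_def by simp
  then show False using assms unfolding mons_deg_def by simp
qed

lemma mons_deg_1_eq_var_mon:
  assumes "a \<in> mons_deg n 1" obtains i where "i < n" "a = var_mon i"
proof -
  obtain i where i: "i < n" "0 < a i" using exists_exponent_pos[OF assms] by auto
  have "var_mon i = a"
    using mdvd_mdeg_eq[OF var_mon_mdvd[of a i, OF i(2)], of n] var_mon_mons_deg[OF i(1)] assms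
    unfolding mons_deg_def by simp
  then show ?thesis using that i by blast
qed

lemma hilb_le_card_mons_deg: "hilb n I e \<le> card (mons_deg n e)"
  unfolding hilb_def by (rule card_mono[OF finite_mons_deg]) auto

text \<open>
  Renaming the variables \<open>W\<close> that are not in a monomial ideal \<open>J\<close> bijectively to
  \<open>x\<^sub>0,\<dots>,x\<^sub>m\<^sub>-\<^sub>1\<close> preserves the Hilbert function, since every standard monomial only involves
  variables of \<open>W\<close>.
\<close>

definition rename_mon :: "nat set \<Rightarrow> (nat \<Rightarrow> nat) \<Rightarrow> (nat \<Rightarrow> nat) \<Rightarrow> (nat \<Rightarrow> nat)" where
  "rename_mon W f b = (\<lambda>i. if i \<in> W then b (f i) else 0)"

context
  fixes n m :: nat and J :: "(nat \<Rightarrow> nat) set" and W :: "nat set" and f :: "nat \<Rightarrow> nat"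
  assumes J: "monomial_ideal n J" and W: "W = {i. i < n \<and> var_mon i \<notin> J}"
    and f: "bij_betw f W {..<m}"
begin

lemma rename_mon_mons: "rename_mon W f b \<in> mons n"
  unfolding rename_mon_def mons_def using W by auto

lemma mdeg_rename_mon: "mdeg n (rename_mon W f b) = mdeg m b"
proof -
  have "mdeg n (rename_mon W f b) = (\<Sum>i\<in>{..<n} \<inter> W. b (f i))"
    unfolding mdeg_def rename_mon_def by (rule sum.inter_restrict[symmetric]) simp
  also have "{..<n} \<inter> W = W" using W by blast
  also have "(\<Sum>i\<in>W. b (f i)) = (\<Sum>j\<in>{..<m}. b j)" by (rule sum.reindex_bij_betw[OF f])
  finally show ?thesis unfolding mdeg_def .
qed

lemma monomial_ideal_rename_preimage: "monomial_ideal m {b \<in> mons m. rename_mon W f b \<in> J}"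
  unfolding monomial_ideal_def
proof (intro conjI ballI impI)
  fix a b assume a: "a \<in> {b \<in> mons m. rename_mon W f b \<in> J}" and b: "b \<in> mons m" and ab: "mdvd a b"
  have "mdvd (rename_mon W f a) (rename_mon W f b)" using ab unfolding mdvd_def rename_mon_def by auto
  then show "b \<in> {b \<in> mons m. rename_mon W f b \<in> J}"
    using monomial_idealD[OF J _ rename_mon_mons] a b by blast
qed auto

lemma std_mons_support: "a \<in> mons n \<Longrightarrow> a \<notin> J \<Longrightarrow> i \<notin> W \<Longrightarrow> a i = 0"
proof (rule ccontr)
  assume a: "a \<in> mons n" "a \<notin> J" "i \<notin> W" "a i \<noteq> 0"
  then have "i < n" "mdvd (var_mon i) a" using mons_exponent_pos var_mon_mdvd by auto
  then show False using a W monomial_idealD[OF J _ a(1)] by blast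
qed

lemma bij_betw_rename_std_mons:
  "bij_betw (rename_mon W f) (std_mons m {b \<in> mons m. rename_mon W f b \<in> J} e) (std_mons n J e)"
  (is "bij_betw ?P (std_mons m ?J' e) _")
proof (rule bij_betw_imageI)
  define finv where "finv = inv_into W f"
  have finv: "finv j \<in> W" "f (finv j) = j" if "j < m" for j
    using f that unfolding finv_def bij_betw_def by (auto intro: inv_into_into f_inv_into_f)
  show "inj_on ?P (std_mons m ?J' e)"
  proof (rule inj_onI)
    fix b b' assume b: "b \<in> std_mons m ?J' e" "b' \<in> std_mons m ?J' e" and eq: "?P b = ?P b'"
    show "b = b'"
    proof
      fix j show "b j = b' j"
        using fun_cong[OF eq, of "finv j"] finv[of j] b
        unfolding rename_mon_def std_mons_def mons_deg_def mons_def by (cases "j < m") auto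
    qed
  qed
  have "a \<in> ?P ` std_mons m ?J' e" if a: "a \<in> std_mons n J e" for a
  proof -
    define b where "b = (\<lambda>j. if j < m then a (finv j) else 0)"
    have bm: "b \<in> mons m" unfolding b_def mons_def by auto
    have "?P b = a"
      using std_mons_support[of a] a f unfolding rename_mon_def b_def std_mons_def mons_deg_def finv_def
      by (auto simp: fun_eq_iff bij_betw_def)
    moreover have "b \<in> std_mons m ?J' e"
      using mdeg_rename_mon[of b] \<open>?P b = a\<close> a bm unfolding std_mons_def mons_deg_def by simp
    ultimately show ?thesis by blast
  qed
  then show "?P ` std_mons m ?J' e = std_mons n J e"
    using rename_mon_mons mdeg_rename_mon unfolding std_mons_def mons_deg_def by auto
qed

lemma monomial_ideal_rename_vars: "\<exists>J'. monomial_ideal m J' \<and> (\<forall>e. hilb m J' e = hilb n J e)"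
  using monomial_ideal_rename_preimage bij_betw_rename_std_mons bij_betw_same_card
  unfolding hilb_eq_card_std_mons by blast

end

lemma O_sequence_monomial_ideal_vars:
  assumes O: "O_sequence g"
  shows "\<exists>J. monomial_ideal (g 1) J \<and> (\<forall>e. hilb (g 1) J e = g e)"
proof -
  obtain n J where J: "monomial_ideal n J" and gJ: "\<forall>d. g d = hilb n J d"
    using O unfolding O_sequence_def by blast
  define W where "W = {i. i < n \<and> var_mon i \<notin> J}"
  have "std_mons n J 1 = var_mon ` W"
    unfolding W_def std_mons_def using var_mon_mons_deg mons_deg_1_eq_var_mon by blast
  then have "card W = g 1"
    using gJ card_image[OF inj_on_subset[OF inj_var_mon]] unfolding hilb_eq_card_std_mons by simp
  moreover have "finite W" unfolding W_def by simp
  ultimately obtain f where "bij_betw f W {..<g 1}"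
    using finite_same_card_bij[of W "{..<g 1}"] by auto
  then show ?thesis using monomial_ideal_rename_vars[OF J W_def] gJ by metis
qed

lemma O_sequence_var_zero:
  assumes O: "O_sequence h" and h1: "h 1 = 0" and d: "0 < d" shows "h d = 0"
proof -
  obtain J where J: "monomial_ideal 0 J" and hJ: "\<forall>e. hilb 0 J e = h e"
    using O_sequence_monomial_ideal_vars[OF O] h1 by auto
  have "std_mons 0 J d = {}"
    using exists_exponent_pos[of _ 0 d] d unfolding std_mons_def by blast
  then show ?thesis using hJ unfolding hilb_eq_card_std_mons by (metis card.empty)
qed

lemma shadow_lex_seg_subset:
  assumes O: "O_sequence g"
  shows "shadow (g 1) (lex_seg (g 1) g e) \<subseteq> lex_seg (g 1) g (Suc e)"
proof -
  obtain J where J: "monomial_ideal (g 1) J" and gJ: "\<forall>e. hilb (g 1) J e = g e"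
    using O_sequence_monomial_ideal_vars[OF O] by blast
  have "card (J \<inter> mons_deg (g 1) e) = card (mons_deg (g 1) e) - g e" for e
  proof -
    have "mons_deg (g 1) e = (J \<inter> mons_deg (g 1) e) \<union> std_mons (g 1) J e"
      "(J \<inter> mons_deg (g 1) e) \<inter> std_mons (g 1) J e = {}"
      unfolding std_mons_def by blast+
    then have "card (mons_deg (g 1) e) = card (J \<inter> mons_deg (g 1) e) + card (std_mons (g 1) J e)"
      using finite_mons_deg finite_std_mons by (metis card_Un_disjoint finite_Int)
    then show ?thesis using gJ unfolding hilb_eq_card_std_mons by simp
  qed
  then show ?thesis
    using shadow_lex_initial_ideal[OF J, of e] unfolding lex_seg_eq_lex_initial by simp
qed

lemma O_sequence_le_card_mons_deg:
  "O_sequence g \<Longrightarrow> g e \<le> card (mons_deg (g 1) e)"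
  using O_sequence_monomial_ideal_vars hilb_le_card_mons_deg by metis

lemma lex_seg_subset: "lex_seg m g e \<subseteq> mons_deg m e"
  unfolding lex_seg_eq_lex_initial by (rule lex_initial_subset)

lemma Lex_subset_mons: "Lex m g \<subseteq> mons m"
  unfolding Lex_def by (rule gen_ideal_subset_mons)

lemma monomial_ideal_Lex: "monomial_ideal m (Lex m g)"
  unfolding Lex_def by (rule monomial_ideal_gen_ideal)

lemma lex_seg_subset_Lex: "lex_seg m g e \<subseteq> Lex m g"
  unfolding Lex_def gen_ideal_def using lex_seg_subset mdvd_refl unfolding mons_deg_def by blast

lemma mons_deg_subset_Lex: "g e = 0 \<Longrightarrow> mons_deg m e \<subseteq> Lex m g"
  using lex_seg_subset_Lex[of m g e] lex_initial_all[of m e]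
  unfolding lex_seg_eq_lex_initial by simp

lemma Lex_move:
  assumes a: "a \<in> Lex m g" and j: "0 < a j" and ij: "i < j"
  shows "(a(j := a j - 1))(i := a i + 1) \<in> Lex m g"
proof -
  let ?a' = "(a(j := a j - 1))(i := a i + 1)"
  obtain e s where s: "s \<in> lex_seg m g e" "mdvd s a" and am: "a \<in> mons m"
    using a unfolding Lex_def gen_ideal_def by blast
  have jm: "j < m" using mons_exponent_pos[OF am] j by simp
  have a'm: "?a' \<in> mons m" using mons_fun_upd[OF mons_fun_upd[OF am jm]] ij jm by simp
  show ?thesis
  proof (cases "s j < a j")
    case True
    have "mdvd s ?a'" unfolding mdvd_def
    proof
      fix x show "s x \<le> ?a' x" using s(2) True ij unfolding mdvd_def
        by (cases "x = i"; cases "x = j") (auto simp: le_SucI)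
    qed
    then show ?thesis using monomial_idealD[OF monomial_ideal_Lex] lex_seg_subset_Lex s(1) a'm by blast
  next
    case False
    then have sj: "s j = a j" using s(2) unfolding mdvd_def by (simp add: le_antisym not_less)
    let ?s' = "(s(j := s j - 1))(i := s i + 1)"
    have "0 < s j" using sj j by simp
    then have "?s' \<in> lex_seg m g e"
      using lex_initial_move[OF _ ij] s(1) unfolding lex_seg_eq_lex_initial by blast
    moreover have "mdvd ?s' ?a'" using s(2) sj ij unfolding mdvd_def by auto
    ultimately show ?thesis using monomial_idealD[OF monomial_ideal_Lex] lex_seg_subset_Lex a'm by blast
  qed
qed

context
  fixes m :: nat and g :: "nat \<Rightarrow> nat"
  assumes shadow_closed: "\<And>e. shadow m (lex_seg m g e) \<subseteq> lex_seg m g (Suc e)"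
    and g_le: "\<And>e. g e \<le> card (mons_deg m e)"
begin

lemma lex_seg_multiple:
  "s \<in> lex_seg m g e \<Longrightarrow> t \<in> mons_deg m (e + j) \<Longrightarrow> mdvd s t \<Longrightarrow> t \<in> lex_seg m g (e + j)"
proof (induction j arbitrary: t)
  case 0
  then show ?case using mdvd_mdeg_eq[of s t m] lex_seg_subset unfolding mons_deg_def by fastforce
next
  case (Suc j)
  have sm: "s \<in> mons m" "mdeg m s = e" using Suc.prems(1) lex_seg_subset unfolding mons_deg_def by auto
  have tm: "t \<in> mons m" "mdeg m t = Suc (e + j)" using Suc.prems(2) unfolding mons_deg_def by auto
  obtain i where i: "s i < t i" using mdvd_mdeg_less[OF Suc.prems(3) sm(1) tm(1)] sm(2) tm(2) by auto
  have im: "i < m" using mons_exponent_pos[OF tm(1)] i by simp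
  let ?t' = "t(i := t i - 1)"
  have "?t' \<in> mons_deg m (e + j)"
    using mons_fun_upd[OF tm(1) im] mdeg_decr[of i m t] im i tm(2) unfolding mons_deg_def by simp
  moreover have "mdvd s ?t'" using Suc.prems(3) i unfolding mdvd_def by auto
  ultimately have "?t' \<in> lex_seg m g (e + j)" using Suc.IH[OF Suc.prems(1)] by blast
  moreover have "t = ?t'(i := Suc (?t' i))" using i by (simp add: fun_eq_iff)
  ultimately have "t \<in> shadow m (lex_seg m g (e + j))" using shadowI[OF _ im] by metis
  then show ?case using shadow_closed by auto
qed

lemma Lex_Int_mons_deg: "Lex m g \<inter> mons_deg m e = lex_seg m g e"
proof
  show "Lex m g \<inter> mons_deg m e \<subseteq> lex_seg m g e"
  proof
    fix t assume t: "t \<in> Lex m g \<inter> mons_deg m e"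
    then obtain e' s where s: "s \<in> lex_seg m g e'" "mdvd s t"
      unfolding Lex_def gen_ideal_def by blast
    have "e' \<le> e" using mdvd_mdeg[OF s(2)] s(1) t lex_seg_subset unfolding mons_deg_def by fastforce
    then show "t \<in> lex_seg m g e" using lex_seg_multiple[OF s(1), of t "e - e'"] s(2) t by simp
  qed
qed (use lex_seg_subset_Lex lex_seg_subset in blast)

lemma hilb_Lex: "hilb m (Lex m g) e = g e"
proof -
  have "std_mons m (Lex m g) e = mons_deg m e - lex_seg m g e"
    using Lex_Int_mons_deg unfolding std_mons_def by blast
  then have "hilb m (Lex m g) e = card (mons_deg m e) - card (lex_seg m g e)"
    unfolding hilb_eq_card_std_mons
    by (simp add: card_Diff_subset[OF finite_subset[OF lex_seg_subset finite_mons_deg] lex_seg_subset])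
  also have "card (lex_seg m g e) = card (mons_deg m e) - g e"
    unfolding lex_seg_eq_lex_initial card_lex_initial by simp
  finally show ?thesis using g_le[of e] by simp
qed

end

section \<open>Adjoining the last variable\<close>

lemma mons_restrict_last: "a \<in> mons (Suc m) \<Longrightarrow> a(m := 0) \<in> mons m"
  unfolding mons_def by (auto simp: Suc_le_eq)

lemma mdeg_restrict_last: "mdeg (Suc m) a = mdeg m (a(m := 0)) + a m"
proof -
  have "mdeg m (a(m := 0)) = mdeg m a" unfolding mdeg_def by (rule sum.cong) auto
  then show ?thesis using mdeg_Suc_vars[of m a] by simp
qed

text \<open>
  When \<open>x\<^sub>m\<close> acts as a non-zero-divisor from degree \<open>d\<close> to \<open>d + 1\<close>, the standard monomials of
  degree \<open>d + 1\<close> divisible by \<open>x\<^sub>m\<close> correspond to those of degree \<open>d\<close>.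
\<close>

lemma hilb_Suc_split_last:
  assumes reg: "\<And>a. a \<in> mons_deg (Suc m) (Suc d) \<Longrightarrow> 0 < a m \<Longrightarrow> a \<in> I \<longleftrightarrow> a(m := a m - 1) \<in> I"
  shows "hilb (Suc m) I (Suc d) = card (free_of m (std_mons (Suc m) I (Suc d))) + hilb (Suc m) I d"
proof -
  let ?X = "std_mons (Suc m) I (Suc d)"
  have "colon_last m d ?X = std_mons (Suc m) I d"
  proof (intro set_eqI iffI)
    fix c assume "c \<in> colon_last m d ?X"
    then have c: "c \<in> mons_deg (Suc m) d" "c(m := Suc (c m)) \<in> ?X"
      unfolding colon_last_def by auto
    then show "c \<in> std_mons (Suc m) I d"
      using reg[of "c(m := Suc (c m))"] unfolding std_mons_def by simp
  next
    fix c assume c: "c \<in> std_mons (Suc m) I d"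
    then have "c(m := Suc (c m)) \<in> mons_deg (Suc m) (Suc d)"
      using mons_fun_upd mdeg_incr unfolding std_mons_def mons_deg_def by auto
    then show "c \<in> colon_last m d ?X"
      using c reg[of "c(m := Suc (c m))"] unfolding std_mons_def colon_last_def by simp
  qed
  moreover have "?X \<subseteq> mons_deg (Suc m) (Suc d)" unfolding std_mons_def by blast
  ultimately show ?thesis
    using card_split_last[of ?X m d] unfolding hilb_eq_card_std_mons by simp
qed

abbreviation Lex_ext :: "nat \<Rightarrow> (nat \<Rightarrow> nat) \<Rightarrow> (nat \<Rightarrow> nat) set" where
  "Lex_ext m g \<equiv> gen_ideal (Suc m) (Lex m g)"

lemma mem_Lex_ext_iff:
  assumes a: "a \<in> mons (Suc m)"
  shows "a \<in> Lex_ext m g \<longleftrightarrow> a(m := 0) \<in> Lex m g"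
proof
  assume "a \<in> Lex_ext m g"
  then obtain b where b: "b \<in> Lex m g" "mdvd b a" unfolding gen_ideal_def by blast
  have "b m = 0" using b(1) Lex_subset_mons unfolding mons_def by blast
  then have "mdvd b (a(m := 0))" using b(2) unfolding mdvd_def by simp
  then show "a(m := 0) \<in> Lex m g"
    using monomial_idealD[OF monomial_ideal_Lex b(1) mons_restrict_last[OF a]] by simp
next
  assume "a(m := 0) \<in> Lex m g"
  moreover have "mdvd (a(m := 0)) a" unfolding mdvd_def by simp
  ultimately show "a \<in> Lex_ext m g" unfolding gen_ideal_def using a by blast
qed

lemma free_of_std_mons_Lex_ext: "free_of m (std_mons (Suc m) (Lex_ext m g) d) = std_mons m (Lex m g) d"
proof -
  have "a(m := 0) = a" if "a m = 0" for a :: "nat \<Rightarrow> nat" using that by (simp add: fun_upd_idem)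
  then show ?thesis
    using mons_deg_eq_last_exp_zero[of m d] mem_Lex_ext_iff[of _ m g]
    unfolding free_of_def std_mons_def mons_deg_def by auto
qed

lemma hilb_Lex_ext_0: "hilb (Suc m) (Lex_ext m g) 0 = hilb m (Lex m g) 0"
proof -
  have "free_of m (std_mons (Suc m) (Lex_ext m g) 0) = std_mons (Suc m) (Lex_ext m g) 0"
    using free_of_deg0[of _ "Suc m" m] unfolding std_mons_def by (metis (no_types, lifting) lessI mem_Collect_eq subsetI)
  then show ?thesis using free_of_std_mons_Lex_ext unfolding hilb_eq_card_std_mons by metis
qed

lemma hilb_Lex_ext_Suc:
  "hilb (Suc m) (Lex_ext m g) (Suc d) = hilb m (Lex m g) (Suc d) + hilb (Suc m) (Lex_ext m g) d"
proof -
  have "a \<in> Lex_ext m g \<longleftrightarrow> a(m := a m - 1) \<in> Lex_ext m g" if "a \<in> mons_deg (Suc m) (Suc d)" for a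
    using mem_Lex_ext_iff[of a m g] mem_Lex_ext_iff[of "a(m := a m - 1)" m g] that mons_fun_upd[of a "Suc m" m]
    unfolding mons_deg_def by simp
  then show ?thesis
    using hilb_Suc_split_last free_of_std_mons_Lex_ext unfolding hilb_eq_card_std_mons by metis
qed

lemma strongly_stable_Lex_ext: "strongly_stable (Suc m) (Lex_ext m g)"
  unfolding strongly_stable_def
proof (intro ballI allI impI)
  fix a j i assume a: "a \<in> Lex_ext m g" and j: "j < Suc m" and aj: "0 < a j" and ij: "i < j"
  let ?a' = "(a(j := a j - 1))(i := a i + 1)"
  have am: "a \<in> mons (Suc m)" using a gen_ideal_subset_mons by blast
  have a'm: "?a' \<in> mons (Suc m)" using mons_fun_upd[OF mons_fun_upd[OF am j]] ij j by simp
  have tl: "a(m := 0) \<in> Lex m g" using mem_Lex_ext_iff[OF am] a by simp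
  have "?a'(m := 0) \<in> Lex m g"
  proof (cases "j = m")
    case True
    have "mdvd (a(m := 0)) (?a'(m := 0))" unfolding mdvd_def using True ij by auto
    then show ?thesis
      using monomial_idealD[OF monomial_ideal_Lex tl mons_restrict_last[OF a'm]] by blast
  next
    case False
    then have jm: "j < m" using j by simp
    have "((a(m := 0))(j := (a(m := 0)) j - 1))(i := (a(m := 0)) i + 1) \<in> Lex m g"
      using Lex_move[OF tl _ ij] aj False by simp
    moreover have "((a(m := 0))(j := (a(m := 0)) j - 1))(i := (a(m := 0)) i + 1) = ?a'(m := 0)"
      using False ij jm by (auto simp: fun_eq_iff)
    ultimately show ?thesis by simp
  qed
  then show "?a' \<in> Lex_ext m g" using mem_Lex_ext_iff[OF a'm] by simp
qed

definition last_saturated_above :: "nat \<Rightarrow> (nat \<Rightarrow> nat) set \<Rightarrow> nat \<Rightarrow> bool" where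
  "last_saturated_above m I D \<longleftrightarrow> (\<forall>a\<in>mons (Suc m). D < mdeg (Suc m) a \<longrightarrow>
     (a \<notin> I \<longleftrightarrow> 0 < a m \<and> a(m := a m - 1) \<notin> I))"

lemma last_saturated_above_Lex_ext:
  assumes "\<And>e. k < e \<Longrightarrow> g e = 0"
  shows "last_saturated_above m (Lex_ext m g) k"
  unfolding last_saturated_above_def
proof (intro ballI impI)
  fix a assume a: "a \<in> mons (Suc m)" and deg: "k < mdeg (Suc m) a"
  have am: "a(m := a m - 1) \<in> mons (Suc m)" using mons_fun_upd[OF a] by simp
  have same: "(a(m := a m - 1))(m := 0) = a(m := 0)" by simp
  have "mdeg m (a(m := 0)) \<le> k" if "a(m := 0) \<notin> Lex m g"
  proof (rule ccontr)
    assume "\<not> mdeg m (a(m := 0)) \<le> k"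
    then have "a(m := 0) \<in> mons_deg m (mdeg m (a(m := 0)))" "g (mdeg m (a(m := 0))) = 0"
      using assms mons_restrict_last[OF a] unfolding mons_deg_def by auto
    then show False using that mons_deg_subset_Lex by blast
  qed
  then show "a \<notin> Lex_ext m g \<longleftrightarrow> 0 < a m \<and> a(m := a m - 1) \<notin> Lex_ext m g"
    using mem_Lex_ext_iff[OF a] mem_Lex_ext_iff[OF am] same mdeg_restrict_last[of m a] deg by auto
qed

lemma hilb_Suc_eq_if_last_saturated:
  assumes sat: "last_saturated_above m I D" and "D \<le> d"
  shows "hilb (Suc m) I (Suc d) = hilb (Suc m) I d"
proof -
  have sat': "a \<notin> I \<longleftrightarrow> 0 < a m \<and> a(m := a m - 1) \<notin> I" if "a \<in> mons_deg (Suc m) (Suc d)" for a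
    using sat that assms(2) unfolding last_saturated_above_def mons_deg_def by auto
  have "free_of m (std_mons (Suc m) I (Suc d)) = {}"
  proof -
    have "a \<in> I" if "a \<in> mons_deg (Suc m) (Suc d)" "a m = 0" for a
      using sat'[OF that(1)] that(2) by simp
    then show ?thesis unfolding free_of_def std_mons_def by blast
  qed
  then show ?thesis using hilb_Suc_split_last[of m d I] sat' by (metis card.empty add_0)
qed

lemma hilb_eq_if_last_saturated:
  assumes "last_saturated_above m I D" "D \<le> d"
  shows "hilb (Suc m) I d = hilb (Suc m) I D"
  using assms(2)
proof (induction d)
  case (Suc d)
  then show ?case
    using hilb_Suc_eq_if_last_saturated[OF assms(1), of d] by (cases "D = Suc d") auto
qed simp

section \<open>Adding revlex-initial segments of standard monomials\<close>

lemma revlex_gt_irrefl: "\<not> revlex_gt n a a" unfolding revlex_gt_def by auto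

lemma revlex_gt_trans:
  assumes "revlex_gt n a b" "revlex_gt n b c" "mdeg n a = mdeg n b" "mdeg n b = mdeg n c"
  shows "revlex_gt n a c"
proof -
  obtain i where i: "i < n" "\<forall>j. i < j \<and> j < n \<longrightarrow> a j = b j" "a i < b i"
    using assms(1,3) unfolding revlex_gt_def by auto
  obtain l where l: "l < n" "\<forall>j. l < j \<and> j < n \<longrightarrow> b j = c j" "b l < c l"
    using assms(2,4) unfolding revlex_gt_def by auto
  show ?thesis unfolding revlex_gt_def
  proof (rule disjI2, intro conjI)
    show "mdeg n a = mdeg n c" using assms by simp
    show "\<exists>i<n. (\<forall>j. i < j \<and> j < n \<longrightarrow> a j = c j) \<and> a i < c i"
    proof (cases "l \<le> i")
      case True
      have "\<forall>j. i < j \<and> j < n \<longrightarrow> a j = c j" using i l True by simp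
      moreover have "a i < c i" using i l True by (cases "l = i") auto
      ultimately show ?thesis using i(1) by blast
    next
      case False
      have "\<forall>j. l < j \<and> j < n \<longrightarrow> a j = c j" using i l False by simp
      moreover have "a l < c l" using i l False by simp
      ultimately show ?thesis using l(1) by blast
    qed
  qed
qed

lemma revlex_gt_total:
  assumes a: "a \<in> mons_deg n e" and b: "b \<in> mons_deg n e" and ne: "a \<noteq> b"
  shows "revlex_gt n a b \<or> revlex_gt n b a"
proof -
  define S where "S = {i. i < n \<and> a i \<noteq> b i}"
  have fin: "finite S" unfolding S_def by simp
  obtain j where j: "a j \<noteq> b j" using ne by auto
  have "j < n"
  proof (rule ccontr)
    assume "\<not> j < n"
    then show False using j a b unfolding mons_deg_def mons_def by simp
  qed
  then have jS: "j \<in> S" unfolding S_def using j by simp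
  define i where "i = Max S"
  have "i \<in> S" unfolding i_def using Max_in[OF fin] jS by blast
  then have i: "i < n" "a i \<noteq> b i" unfolding S_def by auto
  have above: "\<forall>l. i < l \<and> l < n \<longrightarrow> a l = b l"
    using Max_ge[OF fin] unfolding i_def S_def by (auto simp: not_le[symmetric])
  have deg: "mdeg n a = mdeg n b" using a b unfolding mons_deg_def by simp
  show ?thesis
  proof (cases "a i < b i")
    case True
    then show ?thesis unfolding revlex_gt_def using deg i(1) above by blast
  next
    case False
    then have "b i < a i" using i(2) by simp
    then show ?thesis unfolding revlex_gt_def using deg i(1) above by fastforce
  qed
qed

lemma finite_linear_order_revlex: assumes X: "X \<subseteq> mons_deg n e" shows "finite_linear_order_on (revlex_gt n) X"
  unfolding finite_linear_order_on_def
proof (intro conjI ballI impI)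
  show "finite X" using X finite_subset_mons_deg by blast
next
  fix a assume "a \<in> X" show "\<not> revlex_gt n a a" by (rule revlex_gt_irrefl)
next
  fix a b c assume abc: "a \<in> X" "b \<in> X" "c \<in> X" and r: "revlex_gt n a b" "revlex_gt n b c"
  have "mdeg n a = e" "mdeg n b = e" "mdeg n c = e" using abc X unfolding mons_deg_def by auto
  then show "revlex_gt n a c" using revlex_gt_trans[OF r] by simp
next
  fix a b assume ab: "a \<in> X" "b \<in> X" "a \<noteq> b"
  then show "revlex_gt n a b \<or> revlex_gt n b a" using revlex_gt_total[of a n e b] X by blast
qed

lemma revlex_gt_move:
  assumes g: "g \<in> mons n" and j: "j < n" and gj: "0 < g j" and ij: "i < j"
  shows "revlex_gt n ((g(j := g j - 1))(i := g i + 1)) g"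
proof -
  let ?g' = "(g(j := g j - 1))(i := g i + 1)"
  have "mdeg n ?g' = mdeg n g" using mdeg_move[of i n j g] ij j gj by simp
  moreover have "\<forall>l. j < l \<and> l < n \<longrightarrow> ?g' l = g l" using ij by auto
  moreover have "?g' j < g j" using ij gj by simp
  ultimately show ?thesis unfolding revlex_gt_def using j by auto
qed

definition revlex_top :: "nat \<Rightarrow> (nat \<Rightarrow> nat) set \<Rightarrow> nat \<Rightarrow> nat \<Rightarrow> (nat \<Rightarrow> nat) set" where
  "revlex_top n I d r = {a \<in> std_mons n I d. card {b \<in> std_mons n I d. revlex_gt n b a} < r}"

definition revlex_extend :: "nat \<Rightarrow> (nat \<Rightarrow> nat) set \<Rightarrow> nat \<Rightarrow> nat \<Rightarrow> (nat \<Rightarrow> nat) set" where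
  "revlex_extend n I d r = gen_ideal n (I \<union> revlex_top n I d r)"

lemma W1_step_eq_revlex_extend:
  assumes "\<not> (\<forall>d. hilb n I d = h d)"
  defines "d0 \<equiv> LEAST d. hilb n I d \<noteq> h d"
  shows "W1_step n h I = revlex_extend n I d0 (hilb n I d0 - h d0)"
  using assms unfolding W1_step_def revlex_extend_def revlex_top_def std_mons_def Let_def
  by (simp only: if_False)

lemma revlex_top_eq_order_rank_less:
  "revlex_top n I d r = {a \<in> std_mons n I d. order_rank (revlex_gt n) (std_mons n I d) a < r}"
  unfolding revlex_top_def order_rank_def ..

lemma finite_linear_order_revlex_std_mons: "finite_linear_order_on (revlex_gt n) (std_mons n I d)"
  by (rule finite_linear_order_revlex) (auto simp: std_mons_def)

lemma revlex_top_subset: "revlex_top n I d r \<subseteq> std_mons n I d"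
  unfolding revlex_top_def by blast

lemma card_revlex_top: "card (revlex_top n I d r) = min r (hilb n I d)"
  unfolding revlex_top_eq_order_rank_less hilb_eq_card_std_mons
  by (rule card_order_rank_less[OF finite_linear_order_revlex_std_mons])

lemma revlex_top_upward:
  "a \<in> revlex_top n I d r \<Longrightarrow> b \<in> std_mons n I d \<Longrightarrow> revlex_gt n b a \<Longrightarrow> b \<in> revlex_top n I d r"
  unfolding revlex_top_eq_order_rank_less
  using order_rank_less_upward[OF finite_linear_order_revlex_std_mons] by blast

lemma revlex_topD: "g \<in> revlex_top n I d r \<Longrightarrow> g \<in> mons n \<and> mdeg n g = d \<and> g \<notin> I"
  unfolding revlex_top_def std_mons_def mons_deg_def by blast

context
  fixes n d r :: nat and I :: "(nat \<Rightarrow> nat) set"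
  assumes mi: "monomial_ideal n I"
begin

lemma mem_revlex_extend_iff:
  "x \<in> revlex_extend n I d r \<longleftrightarrow> x \<in> mons n \<and> (x \<in> I \<or> (\<exists>g\<in>revlex_top n I d r. mdvd g x))"
  using monomial_idealD[OF mi] mdvd_refl monomial_ideal_def mi
  unfolding revlex_extend_def gen_ideal_def by blast

lemma subset_revlex_extend: "I \<subseteq> revlex_extend n I d r"
  using mem_revlex_extend_iff mi unfolding monomial_ideal_def by blast

lemma monomial_ideal_revlex_extend: "monomial_ideal n (revlex_extend n I d r)"
  unfolding revlex_extend_def by (rule monomial_ideal_gen_ideal)

lemma std_mons_revlex_extend_below:
  assumes "e < d" shows "std_mons n (revlex_extend n I d r) e = std_mons n I e"
proof -
  have "\<not> mdvd g x" if "x \<in> mons_deg n e" "g \<in> revlex_top n I d r" for x g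
    using mdvd_mdeg[of g x n] revlex_topD[OF that(2)] that(1) assms unfolding mons_deg_def by auto
  then show ?thesis using mem_revlex_extend_iff unfolding std_mons_def mons_deg_def by blast
qed

lemma std_mons_revlex_extend:
  "std_mons n (revlex_extend n I d r) d = std_mons n I d - revlex_top n I d r"
proof -
  have "g = x" if "x \<in> mons_deg n d" "g \<in> revlex_top n I d r" "mdvd g x" for x g
    using mdvd_mdeg_eq[OF that(3), of n] revlex_topD[OF that(2)] that(1) unfolding mons_deg_def by simp
  then show ?thesis
    using mem_revlex_extend_iff revlex_top_subset mdvd_refl unfolding std_mons_def mons_deg_def by blast
qed

lemma hilb_revlex_extend: "hilb n (revlex_extend n I d r) d = hilb n I d - r"
proof -
  have "card (std_mons n I d - revlex_top n I d r) = hilb n I d - min r (hilb n I d)"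
    using card_Diff_subset[OF finite_subset[OF revlex_top_subset finite_std_mons] revlex_top_subset]
    unfolding card_revlex_top hilb_eq_card_std_mons by simp
  then show ?thesis unfolding hilb_eq_card_std_mons std_mons_revlex_extend by simp
qed

text \<open>
  If \<open>x\<close> is a multiple of a new generator \<open>g\<close>, then a move of \<open>x\<close> is a multiple either of \<open>g\<close>
  or of the same move of \<open>g\<close>; the latter is revlex-larger than \<open>g\<close>, hence new or in \<open>I\<close>.
\<close>

lemma revlex_extend_move:
  assumes g: "g \<in> revlex_top n I d r" and gx: "mdvd g x" and x: "x \<in> mons n"
    and j: "j < n" and xj: "0 < x j" and ij: "i < j"
  shows "(x(j := x j - 1))(i := x i + 1) \<in> revlex_extend n I d r"
proof -
  let ?x' = "(x(j := x j - 1))(i := x i + 1)"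
  have iN: "i < n" using ij j by simp
  have x'm: "?x' \<in> mons n" using mons_fun_upd[OF mons_fun_upd[OF x j] iN] .
  have gI: "g \<in> mons n" "mdeg n g = d" "g \<notin> I" using revlex_topD[OF g] by auto
  show ?thesis
  proof (cases "g j < x j")
    case True
    have "mdvd g ?x'" unfolding mdvd_def
    proof
      fix l show "g l \<le> ?x' l" using gx True ij unfolding mdvd_def
        by (cases "l = i"; cases "l = j") (auto simp: le_SucI)
    qed
    then show ?thesis using mem_revlex_extend_iff x'm g by blast
  next
    case False
    then have gj: "g j = x j" using gx unfolding mdvd_def by (simp add: le_antisym not_less)
    then have gjpos: "0 < g j" using xj by simp
    let ?g' = "(g(j := g j - 1))(i := g i + 1)"
    have g'x: "mdvd ?g' ?x'" unfolding mdvd_def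
    proof
      fix l show "?g' l \<le> ?x' l" using gx gj ij unfolding mdvd_def by (cases "l = i"; cases "l = j") auto
    qed
    have g'm: "?g' \<in> mons_deg n d"
      using mons_deg_move[of g n d, OF _ ij gjpos] gI unfolding mons_deg_def by simp
    show ?thesis
    proof (cases "?g' \<in> I")
      case True
      then show ?thesis
        using monomial_idealD[OF mi _ x'm g'x] subset_revlex_extend by blast
    next
      case False
      then have "?g' \<in> std_mons n I d" unfolding std_mons_def using g'm by simp
      then have "?g' \<in> revlex_top n I d r"
        using revlex_top_upward[OF g] revlex_gt_move[OF gI(1) j gjpos ij] by blast
      then show ?thesis using mem_revlex_extend_iff x'm g'x by blast
    qed
  qed
qed

lemma strongly_stable_revlex_extend:
  assumes ss: "strongly_stable n I"
  shows "strongly_stable n (revlex_extend n I d r)"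
  unfolding strongly_stable_def
proof (intro ballI allI impI)
  fix x j i assume x: "x \<in> revlex_extend n I d r" and j: "j < n" and xj: "0 < x j" and ij: "i < j"
  then have "x \<in> mons n" "x \<in> I \<or> (\<exists>g\<in>revlex_top n I d r. mdvd g x)"
    using mem_revlex_extend_iff by auto
  then show "(x(j := x j - 1))(i := x i + 1) \<in> revlex_extend n I d r"
    using ss j xj ij revlex_extend_move[of _ x, OF _ _ _ j xj ij] subset_revlex_extend
    unfolding strongly_stable_def by blast
qed

end

text \<open>
  If \<open>g | x\<close> but \<open>g \<not>| x/x\<^sub>m\<close> and \<open>deg g < deg x\<close>, then \<open>g/x\<^sub>m\<close> divides \<open>x/x\<^sub>m\<close> properly and
  agrees with it in \<open>x\<^sub>m\<close>, so some \<open>x\<^sub>t\<close> with \<open>t < m\<close> can replace \<open>x\<^sub>m\<close> in \<open>g\<close>.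
\<close>

lemma exchange_last_var_mdvd:
  assumes g: "g \<in> mons (Suc m)" and x: "x \<in> mons (Suc m)" and gx: "mdvd g x"
    and ndvd: "\<not> mdvd g (x(m := x m - 1))" and deg: "mdeg (Suc m) g < mdeg (Suc m) x"
  obtains t where "t < m" "0 < g m" "mdvd ((g(m := g m - 1))(t := g t + 1)) (x(m := x m - 1))"
proof -
  let ?c = "x(m := x m - 1)"
  have m1: "m < Suc m" by simp
  obtain t where t: "?c t < g t" using ndvd unfolding mdvd_def by (auto simp: not_le)
  have "t = m"
  proof (rule ccontr)
    assume "t \<noteq> m"
    then show False using t gx unfolding mdvd_def by (simp add: not_le[symmetric])
  qed
  moreover have "g m \<le> x m" using gx unfolding mdvd_def by blast
  ultimately have gm: "g m = x m" "0 < x m" using t by auto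
  then have gmpos: "0 < g m" by simp
  let ?u = "g(m := g m - 1)"
  have uc: "mdvd ?u ?c" using gx gm unfolding mdvd_def by simp
  have cm: "?c \<in> mons (Suc m)" using mons_fun_upd[OF x m1] .
  have "mdeg (Suc m) ?u < mdeg (Suc m) ?c"
    using mdeg_decr[of m "Suc m" g, OF m1 gmpos] mdeg_decr[of m "Suc m" x, OF m1 gm(2)] deg by simp
  then obtain t' where t': "?u t' < ?c t'"
    using mdvd_mdeg_less[OF uc mons_fun_upd[OF g m1] cm] by blast
  have t'm: "t' \<noteq> m" using t' gm by (cases "t' = m") auto
  have "mdvd ((g(m := g m - 1))(t' := g t' + 1)) ?c" unfolding mdvd_def
  proof
    fix j show "((g(m := g m - 1))(t' := g t' + 1)) j \<le> ?c j"
    proof (cases "j = t'")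
      case True then show ?thesis using t' t'm by simp
    next
      case False then show ?thesis using uc unfolding mdvd_def by simp
    qed
  qed
  moreover have "t' < m" using mons_exponent_pos[OF cm, of t'] t' t'm by simp
  ultimately show ?thesis using that gmpos by blast
qed

text \<open>
  Either \<open>g\<close> divides \<open>x/x\<^sub>m\<close>, or the exchanged monomial of \<open>exchange_last_var_mdvd\<close> does; it
  is revlex-larger than \<open>g\<close>, hence new or in \<open>I\<close>.
\<close>

lemma revlex_extend_last_quotient:
  assumes mi: "monomial_ideal (Suc m) I"
    and g: "g \<in> revlex_top (Suc m) I d r" and gx: "mdvd g x"
    and x: "x \<in> mons (Suc m)" and xd: "d < mdeg (Suc m) x"
  shows "x(m := x m - 1) \<in> revlex_extend (Suc m) I d r"
proof -
  let ?c = "x(m := x m - 1)"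
  have cm: "?c \<in> mons (Suc m)" using mons_fun_upd[OF x] by simp
  have gI: "g \<in> mons (Suc m)" "mdeg (Suc m) g = d" using revlex_topD[OF g] by auto
  show ?thesis
  proof (cases "mdvd g ?c")
    case True then show ?thesis using mem_revlex_extend_iff[OF mi] cm g by blast
  next
    case False
    then obtain t where t: "t < m" "0 < g m" and g'c: "mdvd ((g(m := g m - 1))(t := g t + 1)) ?c"
      using exchange_last_var_mdvd[OF gI(1) x gx] gI(2) xd by blast
    let ?g' = "(g(m := g m - 1))(t := g t + 1)"
    show ?thesis
    proof (cases "?g' \<in> I")
      case True
      then show ?thesis using monomial_idealD[OF mi _ cm g'c] subset_revlex_extend[OF mi] by blast
    next
      case False
      have "?g' \<in> mons_deg (Suc m) d"
        using mons_deg_move[of g "Suc m" d t m] t gI unfolding mons_deg_def by simp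
      then have "?g' \<in> std_mons (Suc m) I d" using False unfolding std_mons_def by simp
      then have "?g' \<in> revlex_top (Suc m) I d r"
        using revlex_top_upward[OF g] revlex_gt_move[OF gI(1) _ t(2,1)] by simp
      then show ?thesis using mem_revlex_extend_iff[OF mi] cm g'c by blast
    qed
  qed
qed

lemma last_saturated_revlex_extend:
  assumes mi: "monomial_ideal (Suc m) I" and sat: "last_saturated_above m I D" and Dd: "D < d"
  shows "last_saturated_above m (revlex_extend (Suc m) I d r) d"
  unfolding last_saturated_above_def
proof (intro ballI impI)
  let ?J = "revlex_extend (Suc m) I d r"
  fix x assume xm: "x \<in> mons (Suc m)" and xd: "d < mdeg (Suc m) x"
  let ?c = "x(m := x m - 1)"
  have cx: "mdvd ?c x" unfolding mdvd_def by simp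
  have satx: "x \<notin> I \<longleftrightarrow> 0 < x m \<and> ?c \<notin> I"
    using sat xm xd Dd unfolding last_saturated_above_def by simp
  show "x \<notin> ?J \<longleftrightarrow> 0 < x m \<and> ?c \<notin> ?J"
  proof
    assume "x \<notin> ?J"
    then show "0 < x m \<and> ?c \<notin> ?J"
      using satx subset_revlex_extend[OF mi] cx xm
        monomial_idealD[OF monomial_ideal_revlex_extend[OF mi]] by blast
  next
    assume c: "0 < x m \<and> ?c \<notin> ?J"
    then have "x \<notin> I" using satx subset_revlex_extend[OF mi] by blast
    moreover have "\<not> mdvd g x" if "g \<in> revlex_top (Suc m) I d r" for g
    proof
      assume "mdvd g x"
      then have "?c \<in> ?J" using revlex_extend_last_quotient[OF mi that _ xm xd] c by simp
      with c show False by simp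
    qed
    ultimately show "x \<notin> ?J" using mem_revlex_extend_iff[OF mi] by blast
  qed
qed

section \<open>The construction of \<open>W\<^sub>1(h)\<close>\<close>

text \<open>The invariant of the construction in \<open>K[x\<^sub>0,\<dots>,x\<^sub>m]\<close>; \<open>k\<close> will be the peak of \<open>h\<close>.\<close>

definition W1_invariant :: "nat \<Rightarrow> (nat \<Rightarrow> nat) \<Rightarrow> nat \<Rightarrow> (nat \<Rightarrow> nat) set \<Rightarrow> nat \<Rightarrow> bool" where
  "W1_invariant m h k I D \<longleftrightarrow> monomial_ideal (Suc m) I \<and> (\<forall>d\<le>D. hilb (Suc m) I d = h d) \<and>
     last_saturated_above m I D \<and> strongly_stable (Suc m) I \<and> k \<le> D"

lemma W1_invariant_hilb_above:
  assumes "W1_invariant m h k I D" "D \<le> d" shows "hilb (Suc m) I d = h D"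
  using assms(1) hilb_eq_if_last_saturated[OF _ assms(2)] unfolding W1_invariant_def by simp

lemma W1_invariant_step:
  assumes decr: "\<And>d. k \<le> d \<Longrightarrow> h (Suc d) \<le> h d"
    and inv: "W1_invariant m h k I D" and ne: "\<not> (\<forall>d. hilb (Suc m) I d = h d)"
  shows "\<exists>D'>D. W1_invariant m h k (W1_step (Suc m) h I) D'"
proof -
  let ?N = "Suc m"
  have mi: "monomial_ideal ?N I" and hD: "\<forall>d\<le>D. hilb ?N I d = h d"
    and sat: "last_saturated_above m I D" and ss: "strongly_stable ?N I" and kD: "k \<le> D"
    using inv unfolding W1_invariant_def by auto
  define d0 where "d0 = (LEAST d. hilb ?N I d \<noteq> h d)"
  define J where "J = revlex_extend ?N I d0 (hilb ?N I d0 - h d0)"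
  have hd0: "hilb ?N I d0 \<noteq> h d0" unfolding d0_def by (rule LeastI_ex) (use ne in simp)
  have below: "\<And>d. d < d0 \<Longrightarrow> hilb ?N I d = h d" unfolding d0_def using not_less_Least by blast
  have Dd0: "D < d0"
  proof (rule ccontr)
    assume "\<not> D < d0" then show False using hD hd0 by simp
  qed
  have "hilb ?N I d0 = h (d0 - 1)"
    using W1_invariant_hilb_above[OF inv, of d0] W1_invariant_hilb_above[OF inv, of "d0 - 1"]
      below[of "d0 - 1"] Dd0 by simp
  moreover have "h d0 \<le> h (d0 - 1)" using decr[of "d0 - 1"] kD Dd0 by simp
  ultimately have "hilb ?N J d0 = h d0" unfolding J_def hilb_revlex_extend[OF mi] by simp
  moreover have "hilb ?N J d = h d" if "d < d0" for d
    using below[OF that] std_mons_revlex_extend_below[OF mi that] unfolding J_def hilb_eq_card_std_mons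
    by simp
  ultimately have "\<forall>d\<le>d0. hilb ?N J d = h d" by (simp add: le_less)
  then have "W1_invariant m h k J d0"
    unfolding W1_invariant_def J_def
    using monomial_ideal_revlex_extend[OF mi] last_saturated_revlex_extend[OF mi sat Dd0]
      strongly_stable_revlex_extend[OF mi ss] kD Dd0 by simp
  moreover have "W1_step ?N h I = J" unfolding J_def d0_def by (rule W1_step_eq_revlex_extend[OF ne])
  ultimately show ?thesis using Dd0 by auto
qed

lemma W1_iterate_progress:
  assumes decr: "\<And>d. k \<le> d \<Longrightarrow> h (Suc d) \<le> h d" and inv0: "W1_invariant m h k I\<^sub>0 k"
  defines "It \<equiv> \<lambda>t. (W1_step (Suc m) h ^^ t) I\<^sub>0"
  shows "\<exists>D. W1_invariant m h k (It t) D \<and> ((\<forall>d. hilb (Suc m) (It t) d = h d) \<or> k + t \<le> D)"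
proof (induction t)
  case 0 then show ?case using inv0 unfolding It_def by auto
next
  case (Suc t)
  then obtain D where D: "W1_invariant m h k (It t) D" "(\<forall>d. hilb (Suc m) (It t) d = h d) \<or> k + t \<le> D"
    by blast
  have step: "It (Suc t) = W1_step (Suc m) h (It t)" unfolding It_def by simp
  show ?case
  proof (cases "\<forall>d. hilb (Suc m) (It t) d = h d")
    case True
    then have "It (Suc t) = It t" unfolding step W1_step_def by simp
    then show ?thesis using D True by auto
  next
    case False
    then obtain D' where "D < D'" "W1_invariant m h k (It (Suc t)) D'"
      using W1_invariant_step[OF decr D(1)] step by auto
    then show ?thesis using D(2) False by auto
  qed
qed

lemma W1_iteration:
  assumes decr: "\<And>d. k \<le> d \<Longrightarrow> h (Suc d) \<le> h d" and vanish: "\<And>d. s < d \<Longrightarrow> h d = 0"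
    and inv0: "W1_invariant m h k I\<^sub>0 k"
  defines "It \<equiv> \<lambda>t. (W1_step (Suc m) h ^^ t) I\<^sub>0"
  defines "N \<equiv> LEAST N. \<forall>d. hilb (Suc m) (It N) d = h d"
  shows "(\<forall>d. hilb (Suc m) (It N) d = h d) \<and> monomial_ideal (Suc m) (It N) \<and> strongly_stable (Suc m) (It N)"
proof -
  have progress: "\<exists>D. W1_invariant m h k (It t) D \<and> ((\<forall>d. hilb (Suc m) (It t) d = h d) \<or> k + t \<le> D)"
    for t unfolding It_def by (rule W1_iterate_progress[where h = h and k = k, OF decr inv0])
  obtain D where D: "W1_invariant m h k (It (Suc s)) D"
    "(\<forall>d. hilb (Suc m) (It (Suc s)) d = h d) \<or> k + Suc s \<le> D"
    using progress by blast
  text \<open>If the Hilbert function is not yet \<open>h\<close>, then \<open>D > s\<close>, so both vanish beyond \<open>D\<close>.\<close>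
  have "hilb (Suc m) (It (Suc s)) d = h d" if "k + Suc s \<le> D" for d
    using D(1) W1_invariant_hilb_above[OF D(1), of d] vanish[of d] vanish[of D] that
    unfolding W1_invariant_def by (cases "d \<le> D") auto
  then have "\<forall>d. hilb (Suc m) (It (Suc s)) d = h d" using D(2) by blast
  then have "\<forall>d. hilb (Suc m) (It N) d = h d" unfolding N_def by (rule LeastI)
  moreover obtain D' where "W1_invariant m h k (It N) D'" using progress by blast
  ultimately show ?thesis unfolding W1_invariant_def by blast
qed

lemma unimodal_peak:
  assumes "unimodal h"
  shows unimodal_peak_incr: "d < peak h \<Longrightarrow> h d < h (Suc d)"
    and unimodal_peak_decr: "peak h \<le> d \<Longrightarrow> h (Suc d) \<le> h d"
proof -
  obtain k where k: "\<forall>i<k. h i < h (Suc i)" "\<forall>i\<ge>k. h (Suc i) \<le> h i"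
    using assms unfolding unimodal_def by auto
  have "peak h = k" unfolding peak_def
    by (rule Least_equality) (use k in \<open>auto simp: not_le[symmetric]\<close>)
  then show "d < peak h \<Longrightarrow> h d < h (Suc d)" "peak h \<le> d \<Longrightarrow> h (Suc d) \<le> h d" using k by auto
qed

lemma Delta_1:
  assumes "unimodal h" "h 0 = 1" shows "Delta h 1 = h 1 - 1"
proof (cases "1 \<le> peak h")
  case False
  then show ?thesis using unimodal_peak_decr[OF assms(1), of 0] assms(2) unfolding Delta_def by simp
qed (simp add: Delta_def assms(2))

lemma hilb_Lex_O_sequence: "O_sequence g \<Longrightarrow> hilb (g 1) (Lex (g 1) g) e = g e"
  by (rule hilb_Lex[OF shadow_lex_seg_subset O_sequence_le_card_mons_deg])

text \<open>Below the peak, \<open>\<Delta>h\<close> is the difference sequence of \<open>h\<close>, so the Hilbert function of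
  \<open>Lex(\<Delta>h)R\<close>, which is the partial sum of \<open>\<Delta>h\<close>, equals \<open>h\<close>.\<close>

lemma W1_invariant_W1_start:
  assumes wl: "weak_lefschetz_O_seq h" and h1: "h 1 = Suc m"
  shows "W1_invariant m h (peak h) (W1_start (Suc m) h) (peak h)"
proof -
  have uni: "unimodal h" and h0: "h 0 = 1" and OD: "O_sequence (Delta h)"
    using wl unfolding weak_lefschetz_O_seq_def finite_O_sequence_def by auto
  have D1: "Delta h 1 = m" using Delta_1[OF uni h0] h1 by simp
  have start: "W1_start (Suc m) h = Lex_ext m (Delta h)" unfolding W1_start_def by simp
  have hilb_Lex_Delta: "hilb m (Lex m (Delta h)) e = Delta h e" for e
    using hilb_Lex_O_sequence[OF OD] D1 by simp
  have "hilb (Suc m) (Lex_ext m (Delta h)) d = h d" if "d \<le> peak h" for d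
    using that
  proof (induction d)
    case 0 then show ?case using hilb_Lex_ext_0 hilb_Lex_Delta h0 unfolding Delta_def by simp
  next
    case (Suc d)
    then show ?case using hilb_Lex_ext_Suc hilb_Lex_Delta unimodal_peak_incr[OF uni, of d]
      unfolding Delta_def by simp
  qed
  moreover have "last_saturated_above m (Lex_ext m (Delta h)) (peak h)"
    by (rule last_saturated_above_Lex_ext) (simp add: Delta_def)
  ultimately show ?thesis
    unfolding W1_invariant_def start using monomial_ideal_gen_ideal strongly_stable_Lex_ext by simp
qed

lemma mons_deg_0_vars: "mons_deg 0 e = (if e = 0 then {\<lambda>_. 0} else {})"
proof -
  have "mons 0 = {\<lambda>_. 0}" unfolding mons_def by auto
  moreover have "mdeg 0 a = 0" for a unfolding mdeg_def by simp
  ultimately show ?thesis unfolding mons_deg_def by auto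
qed

text \<open>With no variables, \<open>Lex(\<Delta>h)\<close> is the zero ideal because \<open>\<Delta>h\<^sub>0 = 1\<close>.\<close>

lemma W1_no_vars:
  assumes wl: "weak_lefschetz_O_seq h" and h1: "h 1 = 0"
  shows "W1 h = {}" "\<forall>d. hilb 0 {} d = h d"
proof -
  have O: "O_sequence h" and h0: "h 0 = 1"
    using wl unfolding weak_lefschetz_O_seq_def finite_O_sequence_def by auto
  show hilb: "\<forall>d. hilb 0 {} d = h d"
    using h0 O_sequence_var_zero[OF O h1] unfolding hilb_def mons_deg_0_vars by auto
  have "lex_seg 0 (Delta h) e = {}" for e
    unfolding lex_seg_def mons_deg_0_vars by (simp add: Delta_def)
  then have "W1_start 0 h = {}" unfolding W1_start_def Lex_def gen_ideal_def by simp
  then show "W1 h = {}" unfolding W1_def Let_def h1 using hilb by simp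
qed

theorem lemma3p1:
  fixes h :: "nat \<Rightarrow> nat"
  assumes "weak_lefschetz_O_seq h"
  shows "(\<forall>d. hilb (h 1) (W1 h) d = h d) \<and> monomial_ideal (h 1) (W1 h)
         \<and> strongly_stable (h 1) (W1 h)"
proof (cases "h 1")
  case 0
  then show ?thesis
    using W1_no_vars[OF assms] unfolding monomial_ideal_def strongly_stable_def by simp
next
  case (Suc m)
  obtain s where "\<And>d. s < d \<Longrightarrow> h d = 0"
    using assms unfolding weak_lefschetz_O_seq_def finite_O_sequence_def by auto
  moreover have "unimodal h" using assms unfolding weak_lefschetz_O_seq_def by simp
  ultimately show ?thesis
    using W1_iteration[OF unimodal_peak_decr _ W1_invariant_W1_start[OF assms Suc]]
    unfolding W1_def Let_def Suc by blast
qed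

end
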